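(* Let $N\ge1$ be an integer and $\varphi:\mathcal S_{-1,N}\to\mathbb C$ a Lie algebra homomorphism with $\varphi(h(N))\neq0$. Let $w=\sum_{\gamma\in\Gamma}a_\gamma X(\gamma)v$ ($a_\gamma\in\mathbb C$, finitely many nonzero) be a singular vector of $\hat M(\varphi)$ with $w\notin\mathbb Cv$. Let $H=\max\{\mathrm{Ht}(\gamma):a_\gamma\ne0\}$ and $l=\min\{\ell(\gamma): a_\gamma\neq0,\ \mathrm{Ht}(\gamma)=H\}$. Then: (1) every $\gamma=(\gamma_+,\gamma_0,\gamma_-)$ with $a_\gamma\neq0$, $\mathrm{Ht}(\gamma)=H$ and $\ell(\gamma)=l$ satisfies $\gamma_+=\gamma_-=\emptyset$, i.e. $X(\gamma)=h(\gamma_0)$; (2) if $\gamma$ is such an element with $\gamma_0=(m_1,\dots,m_l)$, then for every $1\le k\le l$ and every integer $1\le i\le -m_k$, setting $\bar\gamma_0=(m_1,\dots,\widehat{m_k},\dots,m_l)$ and $\gamma^{(i)}=((-i),\bar\gamma_0,(N+m_k+i))\in\Gamma$, we have $$a_{\gamma^{(i)}}=\frac{2a_\gamma}{\varphi(h(N))}\,\big|\{1\le j\le l: m_j=m_k\}\big|.$$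
   Context: Let $\mathfrak g=\mathfrak{sl}_2(\mathbb C)$ with basis $e,f,h$ ($[h,e]=2e$, $[h,f]=-2f$, $[e,f]=h$) and invariant form $(e|f)=1$, $(h|h)=2$, $(e|e)=(f|f)=(e|h)=(f|h)=0$. Let $\hat{\mathfrak g}=\mathfrak g\otimes\mathbb C[t^{\pm1}]\oplus\mathbb CK$ with $x(n)=x\otimes t^n$, $[x(m),y(n)]=[x,y](m+n)+m\delta_{m+n,0}(x|y)K$, $K$ central. For integers $N_1,N_2$ with $N_1+N_2\ge0$, $\mathcal S_{N_1,N_2}$ is the subalgebra of $\hat{\mathfrak g}$ spanned by $K$, $h(n)$ ($n\ge0$), $e(n)$ ($n>N_1$), $f(n)$ ($n>N_2$). For a Lie algebra homomorphism $\varphi:\mathcal S_{N_1,N_2}\to\mathbb C$, let $\mathbb Cv$ be the one-dimensional $\mathcal S_{N_1,N_2}$-module with $xv=\varphi(x)v$, and $\hat M(\varphi)=U(\hat{\mathfrak g})\otimes_{U(\mathcal S_{N_1,N_2})}\mathbb Cv$ (write $v$ for $1\otimes v$). A nonzero vector $w$ in $\hat M(\varphi)$ (or in a quotient of it) is a singular vector if $e(N_1+i)w=f(N_2+i)w=(h(i)-\varphi(h(i)))w=0$ for all integers $i\ge1$ and $h(0)w=\lambda w$ for some $\lambda\in\mathbb C$. Notation (case $N_1=-1$, $N_2=N$): for $m\in\mathbb Z$, $\Gamma_m$ is the set of finite nondecreasing tuples $(m_1\le\dots\le m_k)$ of integers $\le m$ ($k\ge0$, the empty tuple allowed); for such a tuple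 and $x\in\mathfrak g$, $x(\gamma)=x(m_1)\cdots x(m_k)$ ($=1$ if empty). $\Gamma$ is the set of triples $\gamma=(\gamma_+,\gamma_0,\gamma_-)$ with $\gamma_+,\gamma_0\in\Gamma_{-1}$, $\gamma_-\in\Gamma_N$, and $X(\gamma)=e(\gamma_+)h(\gamma_0)f(\gamma_-)$; the vectors $X(\gamma)v$, $\gamma\in\Gamma$, form a basis of $\hat M(\varphi)$. The length $\ell(\gamma)$ is the total number of entries of $\gamma_+,\gamma_0,\gamma_-$, the height $\mathrm{ht}(\gamma)$ is the sum of all entries, and the true height is $\mathrm{Ht}(\gamma)=\ell(\gamma)N-\mathrm{ht}(\gamma)$. The notation $(a)$ denotes a one-entry tuple. *)

theory Defs
  imports Complex_Main
begin

datatype sl2 = Ee | Ff | Hh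

datatype gen = L sl2 int | Kc

fun sbr :: "sl2 \<Rightarrow> sl2 \<Rightarrow> (complex \<times> sl2) list" where
  "sbr Hh Ee = [(2, Ee)]"
| "sbr Ee Hh = [(-2, Ee)]"
| "sbr Hh Ff = [(-2, Ff)]"
| "sbr Ff Hh = [(2, Ff)]"
| "sbr Ee Ff = [(1, Hh)]"
| "sbr Ff Ee = [(-1, Hh)]"
| "sbr _ _ = []"

fun sform :: "sl2 \<Rightarrow> sl2 \<Rightarrow> complex" where
  "sform Ee Ff = 1"
| "sform Ff Ee = 1"
| "sform Hh Hh = 2"
| "sform _ _ = 0"

fun brk :: "gen \<Rightarrow> gen \<Rightarrow> (complex \<times> gen) list" where
  "brk (L x m) (L y n) =
     map (\<lambda>(c, z). (c, L z (m + n))) (sbr x y)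
     @ (if m + n = 0 then [(of_int m * sform x y, Kc)] else [])"
| "brk _ _ = []"

definition hatg_module :: "(complex \<Rightarrow> 'v::ab_group_add \<Rightarrow> 'v) \<Rightarrow> (gen \<Rightarrow> 'v \<Rightarrow> 'v) \<Rightarrow> bool" where
  "hatg_module scale act \<longleftrightarrow>
     module scale
   \<and> (\<forall>g u w. act g (u + w) = act g u + act g w)
   \<and> (\<forall>g c u. act g (scale c u) = scale c (act g u))
   \<and> (\<forall>a b u. act a (act b u) - act b (act a u)
              = sum_list (map (\<lambda>(c, z). scale c (act z u)) (brk a b)))"

text \<open>Spanning generators of the subalgebra S_{N1,N2}.\<close>
fun inS :: "int \<Rightarrow> int \<Rightarrow> gen \<Rightarrow> bool" where
  "inS N1 N2 Kc = True"
| "inS N1 N2 (L Hh n) = (n \<ge> 0)"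
| "inS N1 N2 (L Ee n) = (n > N1)"
| "inS N1 N2 (L Ff n) = (n > N2)"

text \<open>A linear map phi on S (given on the spanning set) is a Lie algebra homomorphism
  to C iff it vanishes on all brackets of spanning elements.\<close>
definition lie_hom_S :: "int \<Rightarrow> int \<Rightarrow> (gen \<Rightarrow> complex) \<Rightarrow> bool" where
  "lie_hom_S N1 N2 \<phi> \<longleftrightarrow>
     (\<forall>a b. inS N1 N2 a \<and> inS N1 N2 b \<longrightarrow>
        sum_list (map (\<lambda>(c, z). c * \<phi> z) (brk a b)) = 0)"

definition Gamma_m :: "int \<Rightarrow> int list \<Rightarrow> bool" where
  "Gamma_m m xs \<longleftrightarrow> sorted xs \<and> (\<forall>x\<in>set xs. x \<le> m)"

type_synonym triple = "int list \<times> int list \<times> int list"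

text \<open>Gamma for general (N1,N2): gamma_+ in Gamma_{N1}, gamma_0 in Gamma_{-1}, gamma_- in Gamma_{N2}.
  For N1 = -1 this is the set Gamma of the paper.\<close>
definition Gamma :: "int \<Rightarrow> int \<Rightarrow> triple set" where
  "Gamma N1 N2 = {(p, z, q). Gamma_m N1 p \<and> Gamma_m (-1) z \<and> Gamma_m N2 q}"

definition Xlist :: "triple \<Rightarrow> gen list" where
  "Xlist \<gamma> = map (L Ee) (fst \<gamma>) @ map (L Hh) (fst (snd \<gamma>)) @ map (L Ff) (snd (snd \<gamma>))"

definition Xact :: "(gen \<Rightarrow> 'v \<Rightarrow> 'v) \<Rightarrow> triple \<Rightarrow> 'v \<Rightarrow> 'v" where
  "Xact act \<gamma> u = foldr act (Xlist \<gamma>) u"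

definition glen :: "triple \<Rightarrow> nat" where
  "glen \<gamma> = length (fst \<gamma>) + length (fst (snd \<gamma>)) + length (snd (snd \<gamma>))"

definition ght :: "triple \<Rightarrow> int" where
  "ght \<gamma> = sum_list (fst \<gamma>) + sum_list (fst (snd \<gamma>)) + sum_list (snd (snd \<gamma>))"

definition gHt :: "int \<Rightarrow> triple \<Rightarrow> int" where
  "gHt N \<gamma> = int (glen \<gamma>) * N - ght \<gamma>"

text \<open>(scale, act, v) is (isomorphic to) the induced module M(phi): a module for the
  affine algebra, v is a weight vector for S with character phi, and the vectors X(gamma) v,
  gamma in Gamma, are pairwise distinct and form a basis.  By the PBW theorem the induced
  module satisfies this, and any such triple is isomorphic to it.\<close>
definition induced_module ::
  "int \<Rightarrow> int \<Rightarrow> (gen \<Rightarrow> complex) \<Rightarrow> (complex \<Rightarrow> 'v::ab_group_add \<Rightarrow> 'v) \<Rightarrow> (gen \<Rightarrow> 'v \<Rightarrow> 'v) \<Rightarrow> 'v \<Rightarrow> bool" where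
  "induced_module N1 N2 \<phi> scale act v \<longleftrightarrow>
     hatg_module scale act
   \<and> (\<forall>g. inS N1 N2 g \<longrightarrow> act g v = scale (\<phi> g) v)
   \<and> inj_on (\<lambda>\<gamma>. Xact act \<gamma> v) (Gamma N1 N2)
   \<and> module.independent scale ((\<lambda>\<gamma>. Xact act \<gamma> v) ` Gamma N1 N2)
   \<and> module.span scale ((\<lambda>\<gamma>. Xact act \<gamma> v) ` Gamma N1 N2) = UNIV"

definition singular ::
  "int \<Rightarrow> int \<Rightarrow> (gen \<Rightarrow> complex) \<Rightarrow> (complex \<Rightarrow> 'v::ab_group_add \<Rightarrow> 'v) \<Rightarrow> (gen \<Rightarrow> 'v \<Rightarrow> 'v) \<Rightarrow> 'v \<Rightarrow> bool" where
  "singular N1 N2 \<phi> scale act w \<longleftrightarrow>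
     w \<noteq> 0
   \<and> (\<forall>i::int. i \<ge> 1 \<longrightarrow>
        act (L Ee (N1 + i)) w = 0 \<and> act (L Ff (N2 + i)) w = 0
      \<and> act (L Hh i) w = scale (\<phi> (L Hh i)) w)
   \<and> (\<exists>\<mu>. act (L Hh 0) w = scale \<mu> w)"

end

theory Submission
  imports Defs "HOL-Library.Multiset"
begin

text \<open>
  Expand \<open>w\<close> in the PBW basis \<open>e(P) h(Z) f(Q) v\<close>, indexed by multisets of modes. Call a mode
  low if it is \<open>e(x)\<close> or \<open>h(x)\<close> with \<open>x \<le> -1\<close>, or \<open>f(n)\<close> with \<open>n \<le> N\<close>, and high otherwise;
  low modes raise the true height. Commuting a high mode \<open>e(j)\<close> or \<open>f(n)\<close> through a monomial of
  true height \<open>t\<close> yields, modulo monomials of true height below \<open>t - j\<close> (resp. \<open>t - n\<close>), an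
  explicit leading part: one mode at a time is replaced by its bracket with \<open>e(j)\<close> (resp. \<open>f(n)\<close>),
  and a resulting \<open>h(N)\<close> acts by the scalar \<open>\<phi>(h(N))\<close>. Only these contractions shorten a
  monomial. As \<open>e(j) w = f(n) w = 0\<close>, the coefficient at the monomial obtained from a top monomial
  \<open>\<gamma>\<close> of minimal length by deleting one \<open>f\<close>-mode (resp. \<open>e\<close>-mode) is \<open>a\<^sub>\<gamma>\<close> times a
  nonzero multiple of \<open>\<phi>(h(N))\<close>, so \<open>\<gamma>\<close> has no \<open>e\<close>- and no \<open>f\<close>-modes. A second such
  computation, at a monomial of the same length as \<open>\<gamma>\<close>, relates \<open>a\<^sub>\<gamma>\<close> to the coefficients of
  the monomials \<open>\<gamma>\<^sup>(\<^sup>i\<^sup>)\<close>.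
\<close>

lemma sum_mset_cong: "(\<And>x. x \<in># M \<Longrightarrow> f x = g x) \<Longrightarrow> (\<Sum>x\<in>#M. f x) = (\<Sum>x\<in>#M. g x)"
  by (metis image_mset_cong)

lemma sum_mset_subtractf:
  "(\<Sum>x\<in>#M. f x - g x) = (\<Sum>x\<in>#M. f x) - (\<Sum>x\<in>#M. g x :: 'a::ab_group_add)"
  by (induction M) (auto simp: algebra_simps)

lemma mset_take_drop_Suc:
  assumes "k < length xs"
  shows "mset (take k xs) + mset (drop (Suc k) xs) = mset xs - {#xs ! k#}"
proof -
  have "mset xs = add_mset (xs ! k) (mset (take k xs) + mset (drop (Suc k) xs))"
    using id_take_nth_drop[OF assms] by (metis mset.simps(2) mset_append union_mset_add_mset_right)
  then show ?thesis by simp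
qed

lemma sorted_take_drop_Suc:
  assumes "sorted xs"
  shows "sorted (take k xs @ drop (Suc k) xs)"
proof -
  have "sorted (take k xs @ drop k xs)" using assms by simp
  moreover have "set (drop (Suc k) xs) \<subseteq> set (drop k xs)" by (rule set_drop_subset_set_drop) simp
  moreover have "sorted (drop (Suc k) xs)" using assms by (simp add: sorted_wrt_drop)
  ultimately show ?thesis unfolding sorted_append by auto
qed

lemma set_take_drop_Suc_subset: "set (take k xs @ drop (Suc k) xs) \<subseteq> set xs"
  using set_take_subset set_drop_subset by fastforce

lemma card_nth_eq_count: "card {j. j < length xs \<and> xs ! j = xs ! k} = count (mset xs) (xs ! k)"
  unfolding count_mset count_list_eq_length_filter length_filter_conv_card
  by (intro arg_cong[where f = card]) auto

definition e_modes :: "triple \<Rightarrow> int multiset" where "e_modes \<gamma> = mset (fst \<gamma>)"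
definition h_modes :: "triple \<Rightarrow> int multiset" where "h_modes \<gamma> = mset (fst (snd \<gamma>))"
definition f_modes :: "triple \<Rightarrow> int multiset" where "f_modes \<gamma> = mset (snd (snd \<gamma>))"

lemma Gamma_eqI:
  assumes "\<gamma> \<in> Gamma N1 N2" "\<gamma>' \<in> Gamma N1 N2"
    and "e_modes \<gamma> = e_modes \<gamma>'" "h_modes \<gamma> = h_modes \<gamma>'" "f_modes \<gamma> = f_modes \<gamma>'"
  shows "\<gamma> = \<gamma>'"
proof -
  have sorted_eq: "xs = ys" if "sorted xs" "sorted ys" "mset xs = mset ys" for xs ys :: "int list"
    using that by (metis properties_for_sort sorted_sort_id)
  show ?thesis
    using assms by (cases \<gamma>; cases \<gamma>')
      (auto simp: Gamma_def Gamma_m_def e_modes_def h_modes_def f_modes_def intro: sorted_eq)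
qed

lemma count_times_if_diff_eq:
  "of_nat (count M x) * (if M - {#x#} = R then c else 0)
     = (if M = add_mset x R then of_nat (count M x) * c else (0::'a::semiring_1))"
  by (cases "x \<in># M") (auto simp: not_in_iff dest: multi_member_split)

definition pbw_len :: "int multiset \<Rightarrow> int multiset \<Rightarrow> int multiset \<Rightarrow> nat" where
  "pbw_len P Z Q = size P + size Z + size Q"

lemma glen_eq_pbw_len: "glen \<gamma> = pbw_len (e_modes \<gamma>) (h_modes \<gamma>) (f_modes \<gamma>)"
  by (simp add: glen_def pbw_len_def e_modes_def h_modes_def f_modes_def)

locale induced_loop_module = module scale
  for scale :: "complex \<Rightarrow> 'v::ab_group_add \<Rightarrow> 'v" (infixr \<open>*s\<close> 75) +
  fixes act :: "gen \<Rightarrow> 'v \<Rightarrow> 'v" and v :: 'v and \<phi> :: "gen \<Rightarrow> complex" and N :: int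
  assumes N_pos: "N \<ge> 1"
    and lie_hom: "lie_hom_S (-1) N \<phi>"
    and induced: "induced_module (-1) N \<phi> scale act v"
begin

lemma act_add: "act g (x + y) = act g x + act g y"
  using induced unfolding induced_module_def hatg_module_def by blast

lemma act_scale: "act g (c *s x) = c *s act g x"
  using induced unfolding induced_module_def hatg_module_def by blast

lemma act_v: "inS (-1) N g \<Longrightarrow> act g v = \<phi> g *s v"
  using induced unfolding induced_module_def by blast

lemma act_zero [simp]: "act g 0 = 0"
  using act_add[of g 0 0] by simp

lemma act_neg: "act g (- x) = - act g x"
  using act_add[of g x "- x"] by (simp add: eq_neg_iff_add_eq_0 add.commute)

lemma act_diff: "act g (x - y) = act g x - act g y"
  using act_add[of g x "- y"] by (simp add: act_neg)

lemma act_sum: "act g (sum f A) = (\<Sum>i\<in>A. act g (f i))"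
  by (induction A rule: infinite_finite_induct) (auto simp: act_add)

lemma act_sum_mset: "act g (\<Sum>x\<in>#M. f x) = (\<Sum>x\<in>#M. act g (f x))"
  by (induction M) (auto simp: act_add)

lemma act_commute:
  "act a (act b u) = act b (act a u) + sum_list (map (\<lambda>(c, z). c *s act z u) (brk a b))"
proof -
  have "act a (act b u) - act b (act a u) = sum_list (map (\<lambda>(c, z). c *s act z u) (brk a b))"
    using induced unfolding induced_module_def hatg_module_def by blast
  then show ?thesis by (simp add: algebra_simps)
qed

lemma comm_ee: "act (L Ee m) (act (L Ee n) u) = act (L Ee n) (act (L Ee m) u)"
  using act_commute[of "L Ee m" "L Ee n" u] by simp

lemma comm_ff: "act (L Ff m) (act (L Ff n) u) = act (L Ff n) (act (L Ff m) u)"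
  using act_commute[of "L Ff m" "L Ff n" u] by simp

lemma comm_hh:
  "act (L Hh c) (act (L Hh a) u) = act (L Hh a) (act (L Hh c) u)
     + (if c + a = 0 then (of_int c * 2) *s act Kc u else 0)"
  using act_commute[of "L Hh c" "L Hh a" u] by simp

lemma comm_eh:
  "act (L Ee m) (act (L Hh a) u) = act (L Hh a) (act (L Ee m) u) + (-2) *s act (L Ee (m + a)) u"
  using act_commute[of "L Ee m" "L Hh a" u] by simp

lemma comm_he:
  "act (L Hh c) (act (L Ee m) u) = act (L Ee m) (act (L Hh c) u) + 2 *s act (L Ee (c + m)) u"
  using act_commute[of "L Hh c" "L Ee m" u] by simp

lemma comm_fh:
  "act (L Ff n) (act (L Hh a) u) = act (L Hh a) (act (L Ff n) u) + 2 *s act (L Ff (n + a)) u"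
  using act_commute[of "L Ff n" "L Hh a" u] by simp

lemma comm_hf:
  "act (L Hh c) (act (L Ff n) u) = act (L Ff n) (act (L Hh c) u) + (-2) *s act (L Ff (c + n)) u"
  using act_commute[of "L Hh c" "L Ff n" u] by simp

lemma comm_ef:
  "act (L Ee m) (act (L Ff n) u) = act (L Ff n) (act (L Ee m) u) + act (L Hh (m + n)) u
     + (if m + n = 0 then of_int m *s act Kc u else 0)"
  using act_commute[of "L Ee m" "L Ff n" u] by simp

lemma comm_fe:
  "act (L Ff n) (act (L Ee m) u) = act (L Ee m) (act (L Ff n) u) + (-1) *s act (L Hh (n + m)) u
     + (if n + m = 0 then of_int n *s act Kc u else 0)"
  using act_commute[of "L Ff n" "L Ee m" u] by simp

lemma comm_K: "act Kc (act g u) = act g (act Kc u)"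
  using act_commute[of Kc g u] by simp

lemma phi_bracket:
  "inS (-1) N a \<Longrightarrow> inS (-1) N b \<Longrightarrow> sum_list (map (\<lambda>(c, z). c * \<phi> z) (brk a b)) = 0"
  using lie_hom unfolding lie_hom_S_def by blast

lemma phi_h_eq_0: "c > N \<Longrightarrow> \<phi> (L Hh c) = 0"
  using phi_bracket[of "L Ee 0" "L Ff c"] N_pos by (auto split: if_splits)

lemma act_e_v: "m \<ge> 0 \<Longrightarrow> act (L Ee m) v = 0"
  using act_v[of "L Ee m"] phi_bracket[of "L Hh 0" "L Ee m"] by (auto split: if_splits)

lemma act_f_v: "n > N \<Longrightarrow> act (L Ff n) v = 0"
  using act_v[of "L Ff n"] phi_bracket[of "L Hh 0" "L Ff n"] N_pos by (auto split: if_splits)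

lemma act_h_v: "c \<ge> 0 \<Longrightarrow> act (L Hh c) v = \<phi> (L Hh c) *s v"
  using act_v[of "L Hh c"] by simp

section \<open>PBW monomials\<close>

lemma foldr_act_perm:
  assumes "\<And>x y. x \<in> set xs \<Longrightarrow> y \<in> set xs \<Longrightarrow> act x \<circ> act y = act y \<circ> act x"
    and "mset xs = mset ys"
  shows "foldr act xs u = foldr act ys u"
proof -
  have "fold act (rev xs) = fold act (rev ys)"
    by (rule fold_multiset_equiv) (use assms in auto)
  then show ?thesis by (simp add: foldr_conv_fold)
qed

definition pbw :: "int multiset \<Rightarrow> int multiset \<Rightarrow> int multiset \<Rightarrow> 'v" where
  "pbw P Z Q = foldr act (map (L Ee) (sorted_list_of_multiset P) @ map (L Hh) (sorted_list_of_multiset Z)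
      @ map (L Ff) (sorted_list_of_multiset Q)) v"

lemma pbw_empty: "pbw {#} {#} {#} = v"
  by (simp add: pbw_def)

lemma act_e_pbw: "act (L Ee m) (pbw P Z Q) = pbw (add_mset m P) Z Q"
proof -
  let ?u = "foldr act (map (L Hh) (sorted_list_of_multiset Z) @ map (L Ff) (sorted_list_of_multiset Q)) v"
  have "foldr act (map (L Ee) (m # sorted_list_of_multiset P)) ?u
      = foldr act (map (L Ee) (sorted_list_of_multiset (add_mset m P))) ?u"
    by (rule foldr_act_perm) (auto simp: fun_eq_iff comm_ee)
  then show ?thesis by (simp add: pbw_def)
qed

lemma act_h_pbw_no_e:
  assumes "a \<le> -1" "\<forall>x\<in>#Z. x \<le> -1"
  shows "act (L Hh a) (pbw {#} Z Q) = pbw {#} (add_mset a Z) Q"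
proof -
  let ?u = "foldr act (map (L Ff) (sorted_list_of_multiset Q)) v"
  have "foldr act (map (L Hh) (a # sorted_list_of_multiset Z)) ?u
      = foldr act (map (L Hh) (sorted_list_of_multiset (add_mset a Z))) ?u"
  proof (rule foldr_act_perm)
    fix x y
    assume "x \<in> set (map (L Hh) (a # sorted_list_of_multiset Z))"
      and "y \<in> set (map (L Hh) (a # sorted_list_of_multiset Z))"
    then obtain c d where "x = L Hh c" "y = L Hh d" "c \<le> -1" "d \<le> -1"
      using assms by auto
    then show "act x \<circ> act y = act y \<circ> act x"
      by (auto simp: fun_eq_iff comm_hh[of c d])
  qed simp
  then show ?thesis by (simp add: pbw_def)
qed

lemma act_f_pbw_f_only: "act (L Ff n) (pbw {#} {#} Q) = pbw {#} {#} (add_mset n Q)"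
proof -
  have "foldr act (map (L Ff) (n # sorted_list_of_multiset Q)) v
      = foldr act (map (L Ff) (sorted_list_of_multiset (add_mset n Q))) v"
    by (rule foldr_act_perm) (auto simp: fun_eq_iff comm_ff)
  then show ?thesis by (simp add: pbw_def)
qed

lemma act_K_pbw: "act Kc (pbw P Z Q) = \<phi> Kc *s pbw P Z Q"
proof -
  have "act Kc (foldr act gs v) = \<phi> Kc *s foldr act gs v" for gs
    by (induction gs) (auto simp: act_v comm_K act_scale)
  then show ?thesis unfolding pbw_def .
qed

definition pbw_index :: "int multiset \<Rightarrow> int multiset \<Rightarrow> int multiset \<Rightarrow> bool" where
  "pbw_index P Z Q \<longleftrightarrow> (\<forall>x\<in>#P. x \<le> -1) \<and> (\<forall>x\<in>#Z. x \<le> -1) \<and> (\<forall>x\<in>#Q. x \<le> N)"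

lemma pbw_index_simps [simp]:
  "pbw_index {#} {#} {#}"
  "pbw_index (add_mset x P) Z Q \<longleftrightarrow> x \<le> -1 \<and> pbw_index P Z Q"
  "pbw_index P (add_mset x Z) Q \<longleftrightarrow> x \<le> -1 \<and> pbw_index P Z Q"
  "pbw_index P Z (add_mset x Q) \<longleftrightarrow> x \<le> N \<and> pbw_index P Z Q"
  by (auto simp: pbw_index_def)

lemma pbw_index_diff:
  "pbw_index P Z Q \<Longrightarrow> pbw_index (P - M) Z Q"
  "pbw_index P Z Q \<Longrightarrow> pbw_index P (Z - M) Q"
  "pbw_index P Z Q \<Longrightarrow> pbw_index P Z (Q - M)"
  by (auto simp: pbw_index_def dest: in_diffD)

definition true_ht :: "int multiset \<Rightarrow> int multiset \<Rightarrow> int multiset \<Rightarrow> int" where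
  "true_ht P Z Q = (\<Sum>x\<in>#P. N - x) + (\<Sum>x\<in>#Z. N - x) + (\<Sum>x\<in>#Q. N - x)"

lemma true_ht_add_mset [simp]:
  "true_ht (add_mset x P) Z Q = true_ht P Z Q + (N - x)"
  "true_ht P (add_mset x Z) Q = true_ht P Z Q + (N - x)"
  "true_ht P Z (add_mset x Q) = true_ht P Z Q + (N - x)"
  by (simp_all add: true_ht_def)

lemma true_ht_diff:
  "x \<in># P \<Longrightarrow> true_ht (P - {#x#}) Z Q = true_ht P Z Q - (N - x)"
  "x \<in># Z \<Longrightarrow> true_ht P (Z - {#x#}) Q = true_ht P Z Q - (N - x)"
  "x \<in># Q \<Longrightarrow> true_ht P Z (Q - {#x#}) = true_ht P Z Q - (N - x)"
  by (auto simp: true_ht_def dest!: multi_member_split)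

section \<open>The true-height filtration\<close>

definition pbw_span :: "(int multiset \<Rightarrow> int multiset \<Rightarrow> int multiset \<Rightarrow> bool) \<Rightarrow> int \<Rightarrow> 'v set" where
  "pbw_span C k = span {pbw P Z Q | P Z Q. C P Z Q \<and> true_ht P Z Q \<le> k}"

abbreviation Fil :: "int \<Rightarrow> 'v set" where
  "Fil \<equiv> pbw_span pbw_index"

text \<open>On monomials without \<open>e\<close>-modes a low mode \<open>f(n)\<close> only meets \<open>h\<close>-modes, so it preserves
  this smaller filtration.\<close>

abbreviation Fil_hf :: "int \<Rightarrow> 'v set" where
  "Fil_hf \<equiv> pbw_span (\<lambda>P Z Q. P = {#} \<and> pbw_index P Z Q)"

lemma pbw_span_mono: "x \<in> pbw_span C k \<Longrightarrow> k \<le> k' \<Longrightarrow> x \<in> pbw_span C k'"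
  unfolding pbw_span_def by (rule subsetD[OF span_mono, rotated]) fastforce+

lemma pbw_span_base: "C P Z Q \<Longrightarrow> true_ht P Z Q \<le> k \<Longrightarrow> pbw P Z Q \<in> pbw_span C k"
  unfolding pbw_span_def by (rule span_base) auto

lemma pbw_span_zero: "0 \<in> pbw_span C k"
  unfolding pbw_span_def by (rule span_zero)

lemma pbw_span_add: "x \<in> pbw_span C k \<Longrightarrow> y \<in> pbw_span C k \<Longrightarrow> x + y \<in> pbw_span C k"
  unfolding pbw_span_def by (rule span_add)

lemma pbw_span_scale: "x \<in> pbw_span C k \<Longrightarrow> c *s x \<in> pbw_span C k"
  unfolding pbw_span_def by (rule span_scale)

lemma pbw_span_neg: "x \<in> pbw_span C k \<Longrightarrow> - x \<in> pbw_span C k"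
  unfolding pbw_span_def by (rule span_neg)

lemma pbw_span_sum_mset: "(\<And>x. x \<in># M \<Longrightarrow> f x \<in> pbw_span C k) \<Longrightarrow> (\<Sum>x\<in>#M. f x) \<in> pbw_span C k"
  by (induction M) (auto intro: pbw_span_add pbw_span_zero)

lemma pbw_span_lead:
  "x - y \<in> pbw_span C k' \<Longrightarrow> y \<in> pbw_span C k \<Longrightarrow> k' \<le> k \<Longrightarrow> x \<in> pbw_span C k"
  by (metis pbw_span_add pbw_span_mono diff_add_cancel)

lemma Fil_hf_subset_Fil: "x \<in> Fil_hf k \<Longrightarrow> x \<in> Fil k"
  unfolding pbw_span_def by (rule subsetD[OF span_mono, rotated]) auto

lemma act_span:
  assumes "\<And>x. x \<in> B \<Longrightarrow> act g x \<in> span C" and "u \<in> span B"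
  shows "act g u \<in> span C"
  using assms(2)
proof (induction u rule: span_induct_alt)
  case (step c x y)
  then show ?case by (simp add: act_add act_scale span_add span_scale assms(1))
qed (simp add: span_zero)

lemma act_pbw_span:
  assumes "\<And>P Z Q. C P Z Q \<Longrightarrow> true_ht P Z Q \<le> k \<Longrightarrow> act g (pbw P Z Q) \<in> pbw_span C (true_ht P Z Q + d)"
    and "u \<in> pbw_span C k"
  shows "act g u \<in> pbw_span C (k + d)"
  unfolding pbw_span_def[of C "k + d"]
proof (rule act_span)
  fix x assume "x \<in> {pbw P Z Q | P Z Q. C P Z Q \<and> true_ht P Z Q \<le> k}"
  then obtain P Z Q where "x = pbw P Z Q" "C P Z Q" "true_ht P Z Q \<le> k" by blast
  then show "act g x \<in> span {pbw P Z Q | P Z Q. C P Z Q \<and> true_ht P Z Q \<le> k + d}"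
    using assms(1) pbw_span_mono[of _ C "true_ht P Z Q + d" "k + d"] unfolding pbw_span_def by auto
qed (use assms(2) in \<open>simp add: pbw_span_def\<close>)

lemma act_h_low_pbw:
  assumes "a \<le> -1" "pbw_index P Z Q"
  shows "act (L Hh a) (pbw P Z Q)
    = pbw P (add_mset a Z) Q + (\<Sum>x\<in>#P. 2 *s pbw (add_mset (a + x) (P - {#x#})) Z Q)"
  using assms(2)
proof (induction P)
  case empty
  then show ?case using act_h_pbw_no_e[of a Z Q] assms(1) by (simp add: pbw_index_def)
next
  case (add x P)
  have "act (L Hh a) (pbw (add_mset x P) Z Q) = act (L Hh a) (act (L Ee x) (pbw P Z Q))"
    by (simp add: act_e_pbw)
  also have "\<dots> = act (L Ee x) (act (L Hh a) (pbw P Z Q)) + 2 *s pbw (add_mset (a + x) P) Z Q"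
    unfolding comm_he by (simp add: act_e_pbw)
  also have "\<dots> = pbw (add_mset x P) (add_mset a Z) Q
      + (\<Sum>y\<in>#P. 2 *s pbw (add_mset (a + y) (add_mset x P - {#y#})) Z Q)
      + 2 *s pbw (add_mset (a + x) P) Z Q"
    using add by (simp add: act_add act_sum_mset act_scale act_e_pbw add_mset_commute cong: image_mset_cong)
  finally show ?case by (simp add: algebra_simps)
qed

lemma act_h_low_pbw_mod_Fil:
  assumes "a \<le> -1" "pbw_index P Z Q"
  shows "act (L Hh a) (pbw P Z Q) - pbw P (add_mset a Z) Q \<in> Fil (true_ht P Z Q - a)"
proof -
  have "(\<Sum>x\<in>#P. 2 *s pbw (add_mset (a + x) (P - {#x#})) Z Q) \<in> Fil (true_ht P Z Q - a)"
  proof (rule pbw_span_sum_mset)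
    fix x assume x: "x \<in># P"
    then have "x \<le> -1" using assms(2) by (auto simp: pbw_index_def)
    then show "2 *s pbw (add_mset (a + x) (P - {#x#})) Z Q \<in> Fil (true_ht P Z Q - a)"
      using x assms by (intro pbw_span_scale pbw_span_base) (auto simp: pbw_index_diff true_ht_diff)
  qed
  then show ?thesis using act_h_low_pbw[OF assms] by simp
qed

lemma act_h_low_Fil:
  assumes "a \<le> -1" "u \<in> Fil k"
  shows "act (L Hh a) u \<in> Fil (k + (N - a))"
proof (rule act_pbw_span[OF _ assms(2)])
  fix P Z Q assume PZQ: "pbw_index P Z Q" "true_ht P Z Q \<le> k"
  show "act (L Hh a) (pbw P Z Q) \<in> Fil (true_ht P Z Q + (N - a))"
  proof (rule pbw_span_lead)
    show "act (L Hh a) (pbw P Z Q) - pbw P (add_mset a Z) Q \<in> Fil (true_ht P Z Q - a)"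
      using act_h_low_pbw_mod_Fil[OF assms(1) PZQ(1)] .
    show "pbw P (add_mset a Z) Q \<in> Fil (true_ht P Z Q + (N - a))"
      using PZQ assms(1) by (intro pbw_span_base) auto
  qed (use N_pos in simp)
qed

lemma act_h_low_Fil_hf:
  assumes "a \<le> -1" "u \<in> Fil_hf k"
  shows "act (L Hh a) u \<in> Fil_hf (k + (N - a))"
proof (rule act_pbw_span[OF _ assms(2)])
  fix P Z Q assume "P = {#} \<and> pbw_index P Z Q" "true_ht P Z Q \<le> k"
  then show "act (L Hh a) (pbw P Z Q) \<in> Fil_hf (true_ht P Z Q + (N - a))"
    using assms(1) act_h_pbw_no_e[of a Z Q] by (auto simp: pbw_index_def intro!: pbw_span_base)
qed

lemma act_e_low_Fil:
  assumes "x \<le> -1" "u \<in> Fil k"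
  shows "act (L Ee x) u \<in> Fil (k + (N - x))"
proof (rule act_pbw_span[OF _ assms(2)])
  fix P Z Q assume "pbw_index P Z Q" "true_ht P Z Q \<le> k"
  then show "act (L Ee x) (pbw P Z Q) \<in> Fil (true_ht P Z Q + (N - x))"
    using assms(1) by (simp add: act_e_pbw) (intro pbw_span_base, auto)
qed

lemma act_f_high_pbw_f_only: "n > N \<Longrightarrow> act (L Ff n) (pbw {#} {#} Q) = 0"
proof (induction Q)
  case empty
  then show ?case by (simp add: pbw_empty act_f_v)
next
  case (add m Q)
  then show ?case by (metis comm_ff act_f_pbw_f_only act_zero)
qed

lemma act_h_high_pbw_f_only:
  assumes "c \<ge> 0"
  shows "act (L Hh c) (pbw {#} {#} Q)
    = (\<Sum>n\<in>#Q. if c + n \<le> N then (-2) *s pbw {#} {#} (add_mset (c + n) (Q - {#n#})) else 0)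
      + \<phi> (L Hh c) *s pbw {#} {#} Q"
proof (induction Q)
  case empty
  then show ?case using act_h_v[OF assms] by (simp add: pbw_empty)
next
  case (add n Q)
  have f_shift: "act (L Ff (c + n)) (pbw {#} {#} Q)
      = (if c + n \<le> N then pbw {#} {#} (add_mset (c + n) Q) else 0)"
    using act_f_high_pbw_f_only[of "c + n" Q] by (simp add: act_f_pbw_f_only)
  have "act (L Hh c) (pbw {#} {#} (add_mset n Q))
      = act (L Ff n) (act (L Hh c) (pbw {#} {#} Q)) + (-2) *s act (L Ff (c + n)) (pbw {#} {#} Q)"
    by (simp add: comm_hf flip: act_f_pbw_f_only)
  also have "act (L Ff n) (act (L Hh c) (pbw {#} {#} Q)) =
     (\<Sum>m\<in>#Q. if c + m \<le> N then (-2) *s pbw {#} {#} (add_mset (c + m) (add_mset n Q - {#m#})) else 0)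
     + \<phi> (L Hh c) *s pbw {#} {#} (add_mset n Q)"
    by (simp add: add act_add act_sum_mset act_scale act_neg act_f_pbw_f_only if_distrib[of "act _"]
        add_mset_commute cong: if_cong image_mset_cong)
  finally show ?case by (simp add: f_shift ac_simps)
qed

lemma act_h_high_pbw_f_only_mod_Fil_hf:
  assumes "c \<ge> 0" "pbw_index {#} {#} Q"
  shows "act (L Hh c) (pbw {#} {#} Q) - (if c = N then \<phi> (L Hh N) *s pbw {#} {#} Q else 0)
    \<in> Fil_hf (true_ht {#} {#} Q + N - c - 1)"
proof -
  have "(\<Sum>n\<in>#Q. if c + n \<le> N then (-2) *s pbw {#} {#} (add_mset (c + n) (Q - {#n#})) else 0)
      \<in> Fil_hf (true_ht {#} {#} Q + N - c - 1)"
    using assms N_pos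
    by (intro pbw_span_sum_mset)
       (auto intro!: pbw_span_neg pbw_span_scale pbw_span_base
         simp: pbw_span_zero pbw_index_diff true_ht_diff)
  moreover have "\<phi> (L Hh c) *s pbw {#} {#} Q - (if c = N then \<phi> (L Hh N) *s pbw {#} {#} Q else 0)
      \<in> Fil_hf (true_ht {#} {#} Q + N - c - 1)"
    using assms phi_h_eq_0[of c]
    by (cases "c < N") (auto intro!: pbw_span_scale pbw_span_base simp: pbw_span_zero)
  ultimately show ?thesis
    using pbw_span_add act_h_high_pbw_f_only[OF assms(1), of Q] by (fastforce simp: algebra_simps)
qed

lemma act_f_low_pbw_no_e_mod_Fil_hf:
  assumes "n \<le> N" "pbw_index {#} Z Q"
  shows "act (L Ff n) (pbw {#} Z Q) - pbw {#} Z (add_mset n Q) \<in> Fil_hf (true_ht {#} Z Q - n)"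
  using assms
proof (induction Z arbitrary: n)
  case empty
  then show ?case by (simp add: act_f_pbw_f_only pbw_span_zero)
next
  case (add a Z)
  have a: "a \<le> -1" and PZQ: "pbw_index {#} Z Q" using add.prems by auto
  then have h_pbw: "act (L Hh a) (pbw {#} Z Q') = pbw {#} (add_mset a Z) Q'" for Q'
    by (intro act_h_pbw_no_e) (auto simp: pbw_index_def)
  define R where "R = act (L Ff n) (pbw {#} Z Q) - pbw {#} Z (add_mset n Q)"
  define R' where "R' = act (L Ff (n + a)) (pbw {#} Z Q) - pbw {#} Z (add_mset (n + a) Q)"
  have R: "R \<in> Fil_hf (true_ht {#} Z Q - n)"
    using add.IH[of n] add.prems PZQ unfolding R_def by auto
  have R': "R' \<in> Fil_hf (true_ht {#} Z Q - (n + a))"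
    using add.IH[of "n + a"] add.prems PZQ a unfolding R'_def by auto
  have "act (L Ff n) (pbw {#} (add_mset a Z) Q) - pbw {#} (add_mset a Z) (add_mset n Q)
     = act (L Hh a) R + 2 *s (R' + pbw {#} Z (add_mset (n + a) Q))"
    unfolding R_def R'_def by (simp add: comm_fh act_diff flip: h_pbw)
  also have "\<dots> \<in> Fil_hf (true_ht {#} (add_mset a Z) Q - n)"
  proof (intro pbw_span_add pbw_span_scale)
    show "act (L Hh a) R \<in> Fil_hf (true_ht {#} (add_mset a Z) Q - n)"
      using act_h_low_Fil_hf[OF a R] by (simp add: algebra_simps)
    show "R' \<in> Fil_hf (true_ht {#} (add_mset a Z) Q - n)"
      using R' by (rule pbw_span_mono) (use N_pos in simp)
    show "pbw {#} Z (add_mset (n + a) Q) \<in> Fil_hf (true_ht {#} (add_mset a Z) Q - n)"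
      using PZQ a add.prems by (intro pbw_span_base) auto
  qed
  finally show ?case .
qed

lemma act_f_low_Fil_hf:
  assumes "n \<le> N" "u \<in> Fil_hf k"
  shows "act (L Ff n) u \<in> Fil_hf (k + (N - n))"
proof (rule act_pbw_span[OF _ assms(2)])
  fix P Z Q assume PZQ: "P = {#} \<and> pbw_index P Z Q" "true_ht P Z Q \<le> k"
  show "act (L Ff n) (pbw P Z Q) \<in> Fil_hf (true_ht P Z Q + (N - n))"
  proof (rule pbw_span_lead)
    show "act (L Ff n) (pbw P Z Q) - pbw P Z (add_mset n Q) \<in> Fil_hf (true_ht P Z Q - n)"
      using act_f_low_pbw_no_e_mod_Fil_hf[OF assms(1)] PZQ by auto
    show "pbw P Z (add_mset n Q) \<in> Fil_hf (true_ht P Z Q + (N - n))"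
      using PZQ assms(1) by (intro pbw_span_base) auto
  qed (use N_pos in simp)
qed

section \<open>Leading terms of the high modes\<close>

text \<open>Commuting \<open>e(j)\<close> past a mode \<open>h(a)\<close> leaves \<open>-2 e(j + a)\<close>, past a mode \<open>f(n)\<close> it leaves
  \<open>h(j + n)\<close>, which is low for \<open>j + n \<le> -1\<close> and acts by \<open>\<phi>(h(N))\<close> for \<open>j + n = N\<close>.\<close>

definition e_past_h :: "int \<Rightarrow> int multiset \<Rightarrow> int multiset \<Rightarrow> int multiset \<Rightarrow> 'v" where
  "e_past_h j P Z Q =
     (\<Sum>a\<in>#Z. if j + a \<le> -1 then (-2) *s pbw (add_mset (j + a) P) (Z - {#a#}) Q else 0)"

definition e_past_f :: "int \<Rightarrow> int multiset \<Rightarrow> int multiset \<Rightarrow> int multiset \<Rightarrow> 'v" where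
  "e_past_f j P Z Q =
     (\<Sum>n\<in>#Q. if j + n \<le> -1 then pbw P (add_mset (j + n) Z) (Q - {#n#})
       else if j + n = N then \<phi> (L Hh N) *s pbw P Z (Q - {#n#}) else 0)"

lemma e_past_in_Fil:
  assumes "j \<ge> 0" "pbw_index P Z Q"
  shows "e_past_h j P Z Q + e_past_f j P Z Q \<in> Fil (true_ht P Z Q - j)"
proof (rule pbw_span_add)
  show "e_past_h j P Z Q \<in> Fil (true_ht P Z Q - j)"
    unfolding e_past_h_def using assms
    by (intro pbw_span_sum_mset)
       (auto intro!: pbw_span_neg pbw_span_scale pbw_span_base
         simp: pbw_span_zero pbw_index_diff true_ht_diff)
  show "e_past_f j P Z Q \<in> Fil (true_ht P Z Q - j)"
    unfolding e_past_f_def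
  proof (rule pbw_span_sum_mset)
    fix n assume n: "n \<in># Q"
    have "pbw P (add_mset (j + n) Z) (Q - {#n#}) \<in> Fil (true_ht P Z Q - j)" if "j + n \<le> -1"
      using that n assms by (intro pbw_span_base) (auto simp: pbw_index_diff true_ht_diff)
    moreover have "pbw P Z (Q - {#n#}) \<in> Fil (true_ht P Z Q - j)" if "j + n = N"
      using that n assms by (intro pbw_span_base) (auto simp: pbw_index_diff true_ht_diff)
    ultimately show "(if j + n \<le> -1 then pbw P (add_mset (j + n) Z) (Q - {#n#})
        else if j + n = N then \<phi> (L Hh N) *s pbw P Z (Q - {#n#}) else 0) \<in> Fil (true_ht P Z Q - j)"
      by (simp add: pbw_span_scale pbw_span_zero)
  qed
qed

lemma act_f_low_e_past_f_f_only:
  assumes "n \<le> N" "pbw_index {#} {#} Q"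
  shows "act (L Ff n) (e_past_f j {#} {#} Q)
      + (if j + n \<le> -1 then pbw {#} {#j + n#} Q else if j + n = N then \<phi> (L Hh N) *s pbw {#} {#} Q else 0)
      - e_past_f j {#} {#} (add_mset n Q)
    \<in> Fil_hf (true_ht {#} {#} Q + N - n - j - 1)"
proof -
  let ?k = "true_ht {#} {#} Q + N - n - j - 1"
  let ?t = "\<lambda>M m. if j + m \<le> -1 then pbw {#} {#j + m#} (M - {#m#})
      else if j + m = N then \<phi> (L Hh N) *s pbw {#} {#} (M - {#m#}) else 0"
  have "(\<Sum>m\<in>#Q. act (L Ff n) (?t Q m) - ?t (add_mset n Q) m) \<in> Fil_hf ?k"
  proof (rule pbw_span_sum_mset)
    fix m assume m: "m \<in># Q"
    show "act (L Ff n) (?t Q m) - ?t (add_mset n Q) m \<in> Fil_hf ?k"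
    proof (cases "j + m \<le> -1")
      case True
      have "act (L Ff n) (pbw {#} {#j + m#} (Q - {#m#})) - pbw {#} {#j + m#} (add_mset n (Q - {#m#}))
          \<in> Fil_hf (true_ht {#} {#j + m#} (Q - {#m#}) - n)"
        by (intro act_f_low_pbw_no_e_mod_Fil_hf[OF assms(1)]) (simp add: True assms(2) pbw_index_diff)
      then show ?thesis
        using True m N_pos by (simp add: true_ht_diff) (erule pbw_span_mono, simp)
    qed (use m in \<open>auto simp: act_f_pbw_f_only act_scale pbw_span_zero\<close>)
  qed
  moreover have "e_past_f j {#} {#} (add_mset n Q) = ?t (add_mset n Q) n + (\<Sum>m\<in>#Q. ?t (add_mset n Q) m)"
    unfolding e_past_f_def by simp
  moreover have "act (L Ff n) (e_past_f j {#} {#} Q) = (\<Sum>m\<in>#Q. act (L Ff n) (?t Q m))"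
    unfolding e_past_f_def act_sum_mset ..
  ultimately show ?thesis
    by (simp add: sum_mset_subtractf)
qed

lemma act_e_high_pbw_f_only_mod_Fil_hf:
  assumes "j \<ge> 0" "pbw_index {#} {#} Q"
  shows "act (L Ee j) (pbw {#} {#} Q) - e_past_f j {#} {#} Q \<in> Fil_hf (true_ht {#} {#} Q - j - 1)"
  using assms(2)
proof (induction Q)
  case empty
  then show ?case using act_e_v[OF assms(1)] by (simp add: pbw_empty e_past_f_def pbw_span_zero)
next
  case (add n Q)
  let ?k = "true_ht {#} {#} (add_mset n Q) - j - 1"
  let ?Y = "pbw {#} {#} Q"
  let ?T = "if j + n \<le> -1 then pbw {#} {#j + n#} Q else if j + n = N then \<phi> (L Hh N) *s ?Y else 0"
  have n: "n \<le> N" and Q: "pbw_index {#} {#} Q" using add.prems by auto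
  define R where "R = act (L Ee j) ?Y - e_past_f j {#} {#} Q"
  have "act (L Ee j) (pbw {#} {#} (add_mset n Q)) - e_past_f j {#} {#} (add_mset n Q)
      = act (L Ff n) R
        + (act (L Ff n) (e_past_f j {#} {#} Q) + ?T - e_past_f j {#} {#} (add_mset n Q))
        + (act (L Hh (j + n)) ?Y - ?T)
        + (if j + n = 0 then of_int j *s act Kc ?Y else 0)"
    unfolding R_def by (simp add: comm_ef act_diff algebra_simps flip: act_f_pbw_f_only)
  also have "\<dots> \<in> Fil_hf ?k"
  proof (intro pbw_span_add)
    show "act (L Ff n) R \<in> Fil_hf ?k"
      using act_f_low_Fil_hf[OF n] add.IH Q unfolding R_def by (fastforce simp: algebra_simps)
    show "act (L Ff n) (e_past_f j {#} {#} Q) + ?T - e_past_f j {#} {#} (add_mset n Q) \<in> Fil_hf ?k"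
      using act_f_low_e_past_f_f_only[OF n Q, of j] by (simp add: algebra_simps)
    show "act (L Hh (j + n)) ?Y - ?T \<in> Fil_hf ?k"
    proof (cases "j + n \<le> -1")
      case True
      then show ?thesis using act_h_pbw_no_e[of "j + n" "{#}" Q] by (simp add: pbw_span_zero)
    next
      case False
      then show ?thesis
        using act_h_high_pbw_f_only_mod_Fil_hf[of "j + n" Q] Q by (simp add: algebra_simps)
    qed
    show "(if j + n = 0 then of_int j *s act Kc ?Y else 0) \<in> Fil_hf ?k"
      using Q N_pos by (auto simp: act_K_pbw pbw_span_zero intro!: pbw_span_scale pbw_span_base)
  qed
  finally show ?case .
qed

lemma act_h_low_e_past_f:
  assumes "a \<le> -1" "pbw_index {#} Z Q"
  shows "act (L Hh a) (e_past_f j {#} Z Q) = e_past_f j {#} (add_mset a Z) Q"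
  unfolding e_past_f_def act_sum_mset
proof (rule sum_mset_cong)
  fix n assume "n \<in># Q"
  then show "act (L Hh a) (if j + n \<le> -1 then pbw {#} (add_mset (j + n) Z) (Q - {#n#})
        else if j + n = N then \<phi> (L Hh N) *s pbw {#} Z (Q - {#n#}) else 0)
      = (if j + n \<le> -1 then pbw {#} (add_mset (j + n) (add_mset a Z)) (Q - {#n#})
        else if j + n = N then \<phi> (L Hh N) *s pbw {#} (add_mset a Z) (Q - {#n#}) else 0)"
    using assms act_h_pbw_no_e[of a "add_mset (j + n) Z" "Q - {#n#}"] act_h_pbw_no_e[of a Z "Q - {#n#}"]
    by (auto simp: act_scale pbw_index_def add_mset_commute)
qed

lemma act_h_low_e_past_h:
  assumes "a \<le> -1" "pbw_index {#} Z Q"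
  shows "act (L Hh a) (e_past_h j {#} Z Q) + (if j + a \<le> -1 then (-2) *s pbw {#j + a#} Z Q else 0)
      - e_past_h j {#} (add_mset a Z) Q
    \<in> Fil (true_ht {#} Z Q + N - a - j - 1)"
proof -
  let ?k = "true_ht {#} Z Q + N - a - j - 1"
  let ?t = "\<lambda>M b. if j + b \<le> -1 then (-2) *s pbw {#j + b#} (M - {#b#}) Q else 0"
  have "(\<Sum>b\<in>#Z. act (L Hh a) (?t Z b) - ?t (add_mset a Z) b) \<in> Fil ?k"
  proof (rule pbw_span_sum_mset)
    fix b assume b: "b \<in># Z"
    show "act (L Hh a) (?t Z b) - ?t (add_mset a Z) b \<in> Fil ?k"
    proof (cases "j + b \<le> -1")
      case True
      have "act (L Hh a) (pbw {#j + b#} (Z - {#b#}) Q) - pbw {#j + b#} (add_mset a (Z - {#b#})) Q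
          \<in> Fil (true_ht {#j + b#} (Z - {#b#}) Q - a)"
        by (intro act_h_low_pbw_mod_Fil[OF assms(1)]) (simp add: True assms(2) pbw_index_diff)
      then have "(-2) *s (act (L Hh a) (pbw {#j + b#} (Z - {#b#}) Q)
          - pbw {#j + b#} (add_mset a (Z - {#b#})) Q) \<in> Fil ?k"
        using b N_pos by (intro pbw_span_scale) (simp add: true_ht_diff, erule pbw_span_mono, simp)
      then show ?thesis
        using True b by (simp add: act_scale act_neg scale_right_diff_distrib)
    qed (simp add: pbw_span_zero)
  qed
  moreover have "e_past_h j {#} (add_mset a Z) Q = ?t (add_mset a Z) a + (\<Sum>b\<in>#Z. ?t (add_mset a Z) b)"
    unfolding e_past_h_def by simp
  moreover have "act (L Hh a) (e_past_h j {#} Z Q) = (\<Sum>b\<in>#Z. act (L Hh a) (?t Z b))"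
    unfolding e_past_h_def act_sum_mset ..
  ultimately show ?thesis
    by (simp add: sum_mset_subtractf)
qed

lemma act_e_high_pbw_no_e_mod_Fil:
  assumes "j \<ge> 0" "pbw_index {#} Z Q"
  shows "act (L Ee j) (pbw {#} Z Q) - (e_past_h j {#} Z Q + e_past_f j {#} Z Q)
    \<in> Fil (true_ht {#} Z Q - j - 1)"
  using assms
proof (induction Z arbitrary: j)
  case empty
  then show ?case
    using act_e_high_pbw_f_only_mod_Fil_hf[of j Q] Fil_hf_subset_Fil by (auto simp: e_past_h_def)
next
  case (add a Z)
  let ?k = "true_ht {#} (add_mset a Z) Q - j - 1"
  let ?Y = "pbw {#} Z Q"
  let ?T = "if j + a \<le> -1 then (-2) *s pbw {#j + a#} Z Q else 0"
  have a: "a \<le> -1" and Y: "pbw_index {#} Z Q" and j: "j \<ge> 0" using add.prems by auto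
  have h_Y: "pbw {#} (add_mset a Z) Q = act (L Hh a) ?Y"
    using act_h_pbw_no_e[of a Z Q] a Y by (simp add: pbw_index_def)
  define R where "R = act (L Ee j) ?Y - (e_past_h j {#} Z Q + e_past_f j {#} Z Q)"
  have "act (L Ee j) (pbw {#} (add_mset a Z) Q)
        - (e_past_h j {#} (add_mset a Z) Q + e_past_f j {#} (add_mset a Z) Q)
      = act (L Hh a) R
        + (act (L Hh a) (e_past_h j {#} Z Q) + ?T - e_past_h j {#} (add_mset a Z) Q)
        + (act (L Hh a) (e_past_f j {#} Z Q) - e_past_f j {#} (add_mset a Z) Q)
        + ((-2) *s act (L Ee (j + a)) ?Y - ?T)"
    unfolding R_def h_Y comm_eh by (simp add: act_diff act_add algebra_simps)
  also have "\<dots> \<in> Fil ?k"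
  proof (intro pbw_span_add)
    show "act (L Hh a) R \<in> Fil ?k"
      using act_h_low_Fil[OF a] add.IH[OF j Y] unfolding R_def by (fastforce simp: algebra_simps)
    show "act (L Hh a) (e_past_h j {#} Z Q) + ?T - e_past_h j {#} (add_mset a Z) Q \<in> Fil ?k"
      using act_h_low_e_past_h[OF a Y, of j] by (simp add: algebra_simps)
    show "act (L Hh a) (e_past_f j {#} Z Q) - e_past_f j {#} (add_mset a Z) Q \<in> Fil ?k"
      using act_h_low_e_past_f[OF a Y] by (simp add: pbw_span_zero)
    show "(-2) *s act (L Ee (j + a)) ?Y - ?T \<in> Fil ?k"
    proof (cases "j + a \<le> -1")
      case True
      then show ?thesis by (simp add: act_e_pbw pbw_span_zero)
    next
      case False
      then have ja: "j + a \<ge> 0" by simp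
      have "act (L Ee (j + a)) ?Y \<in> Fil (true_ht {#} Z Q - (j + a))"
        using add.IH[OF ja Y] e_past_in_Fil[OF ja Y] by (rule pbw_span_lead) simp
      then have "act (L Ee (j + a)) ?Y \<in> Fil ?k"
        by (rule pbw_span_mono) (use N_pos in simp)
      then show ?thesis using False by (simp add: pbw_span_scale pbw_span_neg)
    qed
  qed
  finally show ?case .
qed

lemma act_e_high_pbw_mod_Fil:
  assumes "j \<ge> 0" "pbw_index P Z Q"
  shows "act (L Ee j) (pbw P Z Q) - (e_past_h j P Z Q + e_past_f j P Z Q) \<in> Fil (true_ht P Z Q - j - 1)"
  using assms(2)
proof (induction P)
  case empty
  then show ?case using act_e_high_pbw_no_e_mod_Fil[OF assms(1)] by simp
next
  case (add x P)
  have x: "x \<le> -1" and PZQ: "pbw_index P Z Q" using add.prems by auto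
  have e_lead: "e_past_h j (add_mset x P) Z Q + e_past_f j (add_mset x P) Z Q
      = act (L Ee x) (e_past_h j P Z Q + e_past_f j P Z Q)"
    unfolding e_past_h_def e_past_f_def act_add act_sum_mset
    by (intro arg_cong2[where f = "(+)"] sum_mset_cong)
       (auto simp: act_e_pbw act_scale act_neg add_mset_commute)
  have "act (L Ee j) (pbw (add_mset x P) Z Q) - (e_past_h j (add_mset x P) Z Q + e_past_f j (add_mset x P) Z Q)
     = act (L Ee x) (act (L Ee j) (pbw P Z Q) - (e_past_h j P Z Q + e_past_f j P Z Q))"
    unfolding e_lead act_diff comm_ee by (simp add: act_e_pbw)
  also have "\<dots> \<in> Fil (true_ht P Z Q - j - 1 + (N - x))"
    using act_e_low_Fil[OF x] add.IH PZQ by blast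
  finally show ?case by (simp add: algebra_simps)
qed

lemma act_e_high_pbw_in_Fil:
  "j \<ge> 0 \<Longrightarrow> pbw_index P Z Q \<Longrightarrow> act (L Ee j) (pbw P Z Q) \<in> Fil (true_ht P Z Q - j)"
  using act_e_high_pbw_mod_Fil e_past_in_Fil by (rule pbw_span_lead) auto

lemma act_h_high_pbw_no_e_mod_Fil:
  assumes "c \<ge> 0" "pbw_index {#} Z Q"
  shows "act (L Hh c) (pbw {#} Z Q) - (if c = N then \<phi> (L Hh N) *s pbw {#} Z Q else 0)
    \<in> Fil (true_ht {#} Z Q + N - c - 1)"
  using assms(2)
proof (induction Z)
  case empty
  then show ?case using act_h_high_pbw_f_only_mod_Fil_hf[OF assms(1)] by (simp add: Fil_hf_subset_Fil)
next
  case (add a Z)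
  let ?Y = "pbw {#} Z Q"
  have a: "a \<le> -1" and Y: "pbw_index {#} Z Q" using add.prems by auto
  have h_Y: "pbw {#} (add_mset a Z) Q = act (L Hh a) ?Y"
    using act_h_pbw_no_e[of a Z Q] a Y by (simp add: pbw_index_def)
  define R where "R = act (L Hh c) ?Y - (if c = N then \<phi> (L Hh N) *s ?Y else 0)"
  have "act (L Hh c) (pbw {#} (add_mset a Z) Q) - (if c = N then \<phi> (L Hh N) *s pbw {#} (add_mset a Z) Q else 0)
     = act (L Hh a) R + (if c + a = 0 then (of_int c * 2) *s act Kc ?Y else 0)"
    unfolding h_Y R_def comm_hh[of c a] by (simp add: act_diff act_scale)
  also have "\<dots> \<in> Fil (true_ht {#} (add_mset a Z) Q + N - c - 1)"
  proof (rule pbw_span_add)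
    show "act (L Hh a) R \<in> Fil (true_ht {#} (add_mset a Z) Q + N - c - 1)"
      using act_h_low_Fil[OF a] add.IH Y unfolding R_def by (fastforce simp: algebra_simps)
    show "(if c + a = 0 then (of_int c * 2) *s act Kc ?Y else 0) \<in> Fil (true_ht {#} (add_mset a Z) Q + N - c - 1)"
      using Y N_pos by (auto simp: act_K_pbw pbw_span_zero intro!: pbw_span_scale pbw_span_base)
  qed
  finally show ?case .
qed

lemma act_h_high_pbw_mod_Fil:
  assumes "c \<ge> 0" "pbw_index P Z Q"
  shows "act (L Hh c) (pbw P Z Q) - (if c = N then \<phi> (L Hh N) *s pbw P Z Q else 0)
    \<in> Fil (true_ht P Z Q + N - c - 1)"
  using assms(2)
proof (induction P)
  case empty
  then show ?case using act_h_high_pbw_no_e_mod_Fil[OF assms(1)] by simp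
next
  case (add x P)
  let ?Y = "pbw P Z Q"
  have x: "x \<le> -1" and Y: "pbw_index P Z Q" using add.prems by auto
  define R where "R = act (L Hh c) ?Y - (if c = N then \<phi> (L Hh N) *s ?Y else 0)"
  have "act (L Hh c) (pbw (add_mset x P) Z Q) - (if c = N then \<phi> (L Hh N) *s pbw (add_mset x P) Z Q else 0)
     = act (L Ee x) R + 2 *s act (L Ee (c + x)) ?Y"
    unfolding R_def by (simp add: comm_he act_diff act_scale flip: act_e_pbw)
  also have "\<dots> \<in> Fil (true_ht (add_mset x P) Z Q + N - c - 1)"
  proof (intro pbw_span_add pbw_span_scale)
    show "act (L Ee x) R \<in> Fil (true_ht (add_mset x P) Z Q + N - c - 1)"
      using act_e_low_Fil[OF x] add.IH Y unfolding R_def by (fastforce simp: algebra_simps)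
    show "act (L Ee (c + x)) ?Y \<in> Fil (true_ht (add_mset x P) Z Q + N - c - 1)"
    proof (cases "c + x \<le> -1")
      case True
      then show ?thesis using Y N_pos by (simp add: act_e_pbw) (intro pbw_span_base, auto)
    next
      case False
      then have "act (L Ee (c + x)) ?Y \<in> Fil (true_ht P Z Q - (c + x))"
        using act_e_high_pbw_in_Fil Y by simp
      then show ?thesis by (rule pbw_span_mono) (use N_pos in simp)
    qed
  qed
  finally show ?case .
qed

text \<open>Dually, \<open>f(n)\<close> past \<open>e(x)\<close> leaves \<open>-h(n + x)\<close> and past \<open>h(a)\<close> it leaves \<open>2 f(n + a)\<close>.\<close>

definition f_past_e :: "int \<Rightarrow> int multiset \<Rightarrow> int multiset \<Rightarrow> int multiset \<Rightarrow> 'v" where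
  "f_past_e n P Z Q =
     (\<Sum>x\<in>#P. if n + x \<le> -1 then (-1) *s pbw (P - {#x#}) (add_mset (n + x) Z) Q
       else if n + x = N then (- \<phi> (L Hh N)) *s pbw (P - {#x#}) Z Q else 0)"

definition f_past_h :: "int \<Rightarrow> int multiset \<Rightarrow> int multiset \<Rightarrow> int multiset \<Rightarrow> 'v" where
  "f_past_h n P Z Q =
     (\<Sum>a\<in>#Z. if n + a \<le> N then 2 *s pbw P (Z - {#a#}) (add_mset (n + a) Q) else 0)"

lemma f_past_in_Fil:
  assumes "n > N" "pbw_index P Z Q"
  shows "f_past_e n P Z Q + f_past_h n P Z Q \<in> Fil (true_ht P Z Q - n)"
proof (rule pbw_span_add)
  show "f_past_e n P Z Q \<in> Fil (true_ht P Z Q - n)"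
    unfolding f_past_e_def
  proof (rule pbw_span_sum_mset)
    fix x assume x: "x \<in># P"
    have "pbw (P - {#x#}) (add_mset (n + x) Z) Q \<in> Fil (true_ht P Z Q - n)" if "n + x \<le> -1"
      using that x assms by (intro pbw_span_base) (auto simp: pbw_index_diff true_ht_diff)
    moreover have "pbw (P - {#x#}) Z Q \<in> Fil (true_ht P Z Q - n)" if "n + x = N"
      using that x assms by (intro pbw_span_base) (auto simp: pbw_index_diff true_ht_diff)
    ultimately show "(if n + x \<le> -1 then (-1) *s pbw (P - {#x#}) (add_mset (n + x) Z) Q
        else if n + x = N then (- \<phi> (L Hh N)) *s pbw (P - {#x#}) Z Q else 0) \<in> Fil (true_ht P Z Q - n)"
      using N_pos by (simp add: pbw_span_scale pbw_span_neg pbw_span_zero)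
  qed
  show "f_past_h n P Z Q \<in> Fil (true_ht P Z Q - n)"
    unfolding f_past_h_def using assms
    by (intro pbw_span_sum_mset)
       (auto intro!: pbw_span_scale pbw_span_base simp: pbw_span_zero pbw_index_diff true_ht_diff)
qed

lemma act_h_low_f_past_h:
  assumes "a \<le> -1" "pbw_index {#} Z Q"
  shows "act (L Hh a) (f_past_h n {#} Z Q) + (if n + a \<le> N then 2 *s pbw {#} Z (add_mset (n + a) Q) else 0)
    = f_past_h n {#} (add_mset a Z) Q"
proof -
  have "act (L Hh a) (f_past_h n {#} Z Q)
      = (\<Sum>b\<in>#Z. if n + b \<le> N then 2 *s pbw {#} (add_mset a Z - {#b#}) (add_mset (n + b) Q) else 0)"
    unfolding f_past_h_def act_sum_mset
  proof (rule sum_mset_cong)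
    fix b assume b: "b \<in># Z"
    have "\<forall>x\<in>#Z - {#b#}. x \<le> -1" using assms(2) by (auto simp: pbw_index_def dest: in_diffD)
    then show "act (L Hh a) (if n + b \<le> N then 2 *s pbw {#} (Z - {#b#}) (add_mset (n + b) Q) else 0)
      = (if n + b \<le> N then 2 *s pbw {#} (add_mset a Z - {#b#}) (add_mset (n + b) Q) else 0)"
      using b assms(1) act_h_pbw_no_e[of a "Z - {#b#}" "add_mset (n + b) Q"] by (simp add: act_scale)
  qed
  then show ?thesis by (simp add: f_past_h_def add.commute)
qed

lemma act_f_high_pbw_no_e_mod_Fil:
  assumes "n > N" "pbw_index {#} Z Q"
  shows "act (L Ff n) (pbw {#} Z Q) - f_past_h n {#} Z Q \<in> Fil (true_ht {#} Z Q - n - 1)"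
  using assms
proof (induction Z arbitrary: n)
  case empty
  then show ?case using act_f_high_pbw_f_only[of n Q] by (simp add: f_past_h_def pbw_span_zero)
next
  case (add a Z)
  let ?k = "true_ht {#} (add_mset a Z) Q - n - 1"
  let ?Y = "pbw {#} Z Q"
  let ?T = "if n + a \<le> N then 2 *s pbw {#} Z (add_mset (n + a) Q) else 0"
  have a: "a \<le> -1" and Y: "pbw_index {#} Z Q" and n: "n > N" using add.prems by auto
  have h_Y: "pbw {#} (add_mset a Z) Q = act (L Hh a) ?Y"
    using act_h_pbw_no_e[of a Z Q] a Y by (simp add: pbw_index_def)
  define R where "R = act (L Ff n) ?Y - f_past_h n {#} Z Q"
  have "act (L Ff n) (pbw {#} (add_mset a Z) Q) - f_past_h n {#} (add_mset a Z) Q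
      = act (L Hh a) R + (2 *s act (L Ff (n + a)) ?Y - ?T)"
    unfolding R_def h_Y comm_fh act_diff act_h_low_f_past_h[OF a Y, symmetric]
    by (simp add: algebra_simps)
  also have "\<dots> \<in> Fil ?k"
  proof (rule pbw_span_add)
    show "act (L Hh a) R \<in> Fil ?k"
      using act_h_low_Fil[OF a] add.IH[OF n Y] unfolding R_def by (fastforce simp: algebra_simps)
    show "2 *s act (L Ff (n + a)) ?Y - ?T \<in> Fil ?k"
    proof (cases "n + a \<le> N")
      case True
      have "act (L Ff (n + a)) ?Y - pbw {#} Z (add_mset (n + a) Q) \<in> Fil (true_ht {#} Z Q - (n + a))"
        using act_f_low_pbw_no_e_mod_Fil_hf[OF True Y] by (rule Fil_hf_subset_Fil)
      then have "2 *s (act (L Ff (n + a)) ?Y - pbw {#} Z (add_mset (n + a) Q)) \<in> Fil ?k"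
        by (intro pbw_span_scale, rule pbw_span_mono) (use N_pos in simp)
      then show ?thesis using True by (simp add: scale_right_diff_distrib)
    next
      case False
      then have na: "n + a > N" by simp
      have "f_past_h (n + a) {#} Z Q \<in> Fil (true_ht {#} Z Q - (n + a))"
        using f_past_in_Fil[OF na Y] by (simp add: f_past_e_def)
      with add.IH[OF na Y] have "act (L Ff (n + a)) ?Y \<in> Fil (true_ht {#} Z Q - (n + a))"
        by (rule pbw_span_lead) simp
      then have "act (L Ff (n + a)) ?Y \<in> Fil ?k"
        by (rule pbw_span_mono) (use N_pos in simp)
      then show ?thesis using False by (simp add: pbw_span_scale)
    qed
  qed
  finally show ?case .
qed

lemma act_e_low_f_past_e:
  "act (L Ee x) (f_past_e n P Z Q)
     + (if n + x \<le> -1 then (-1) *s pbw P (add_mset (n + x) Z) Q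
        else if n + x = N then (- \<phi> (L Hh N)) *s pbw P Z Q else 0)
   = f_past_e n (add_mset x P) Z Q"
proof -
  have "act (L Ee x) (f_past_e n P Z Q)
      = (\<Sum>y\<in>#P. if n + y \<le> -1 then (-1) *s pbw (add_mset x P - {#y#}) (add_mset (n + y) Z) Q
          else if n + y = N then (- \<phi> (L Hh N)) *s pbw (add_mset x P - {#y#}) Z Q else 0)"
    unfolding f_past_e_def act_sum_mset
    by (rule sum_mset_cong) (simp add: act_scale act_neg act_e_pbw)
  then show ?thesis by (simp add: f_past_e_def add.commute)
qed

lemma act_e_low_f_past_h: "act (L Ee x) (f_past_h n P Z Q) = f_past_h n (add_mset x P) Z Q"
  unfolding f_past_h_def act_sum_mset by (rule sum_mset_cong) (simp add: act_scale act_e_pbw)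

lemma act_f_high_pbw_mod_Fil:
  assumes "n > N" "pbw_index P Z Q"
  shows "act (L Ff n) (pbw P Z Q) - (f_past_e n P Z Q + f_past_h n P Z Q) \<in> Fil (true_ht P Z Q - n - 1)"
  using assms(2)
proof (induction P)
  case empty
  then show ?case using act_f_high_pbw_no_e_mod_Fil[OF assms(1)] by (simp add: f_past_e_def)
next
  case (add x P)
  let ?k = "true_ht (add_mset x P) Z Q - n - 1"
  let ?Y = "pbw P Z Q"
  let ?T = "if n + x \<le> -1 then (-1) *s pbw P (add_mset (n + x) Z) Q
      else if n + x = N then (- \<phi> (L Hh N)) *s ?Y else 0"
  have x: "x \<le> -1" and Y: "pbw_index P Z Q" using add.prems by auto
  define R where "R = act (L Ff n) ?Y - (f_past_e n P Z Q + f_past_h n P Z Q)"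
  have "act (L Ff n) (pbw (add_mset x P) Z Q) - (f_past_e n (add_mset x P) Z Q + f_past_h n (add_mset x P) Z Q)
      = act (L Ee x) R + ((-1) *s act (L Hh (n + x)) ?Y - ?T)
        + (if n + x = 0 then of_int n *s act Kc ?Y else 0)"
    unfolding R_def act_e_low_f_past_e[symmetric] act_e_low_f_past_h[symmetric]
    by (simp add: comm_fe act_diff act_add algebra_simps flip: act_e_pbw)
  also have "\<dots> \<in> Fil ?k"
  proof (intro pbw_span_add)
    show "act (L Ee x) R \<in> Fil ?k"
      using act_e_low_Fil[OF x] add.IH Y unfolding R_def by (fastforce simp: algebra_simps)
    show "(-1) *s act (L Hh (n + x)) ?Y - ?T \<in> Fil ?k"
    proof (cases "n + x \<le> -1")
      case True
      have "act (L Hh (n + x)) ?Y - pbw P (add_mset (n + x) Z) Q \<in> Fil (true_ht P Z Q - (n + x))"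
        using act_h_low_pbw_mod_Fil[OF True Y] .
      then have "(-1) *s (act (L Hh (n + x)) ?Y - pbw P (add_mset (n + x) Z) Q) \<in> Fil ?k"
        by (intro pbw_span_scale, rule pbw_span_mono) (use N_pos in simp)
      then show ?thesis using True by (simp only: if_True scale_right_diff_distrib)
    next
      case False
      then have "(-1) *s (act (L Hh (n + x)) ?Y - (if n + x = N then \<phi> (L Hh N) *s ?Y else 0)) \<in> Fil ?k"
        using act_h_high_pbw_mod_Fil[of "n + x"] Y by (intro pbw_span_scale) (simp add: algebra_simps)
      moreover have "(-1) *s (act (L Hh (n + x)) ?Y - (if n + x = N then \<phi> (L Hh N) *s ?Y else 0))
          = (-1) *s act (L Hh (n + x)) ?Y - ?T"
        using False by (simp add: scale_right_diff_distrib)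
      ultimately show ?thesis by metis
    qed
    show "(if n + x = 0 then of_int n *s act Kc ?Y else 0) \<in> Fil ?k"
      using Y N_pos by (auto simp: act_K_pbw pbw_span_zero intro!: pbw_span_scale pbw_span_base)
  qed
  finally show ?case .
qed

section \<open>Coefficients in the PBW basis\<close>

lemma true_ht_modes: "true_ht (e_modes \<gamma>) (h_modes \<gamma>) (f_modes \<gamma>) = gHt N \<gamma>"
proof -
  have sum_eq: "(\<Sum>x\<in>#mset xs. N - x) = int (length xs) * N - sum_list xs" for xs
    by (induction xs) (auto simp: algebra_simps)
  show ?thesis
    unfolding true_ht_def e_modes_def h_modes_def f_modes_def sum_eq gHt_def glen_def ght_def
    by (simp add: algebra_simps)
qed

lemma pbw_index_modes: "\<gamma> \<in> Gamma (-1) N \<Longrightarrow> pbw_index (e_modes \<gamma>) (h_modes \<gamma>) (f_modes \<gamma>)"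
  by (auto simp: pbw_index_def Gamma_def Gamma_m_def e_modes_def h_modes_def f_modes_def)

lemma Xact_eq_pbw: "\<gamma> \<in> Gamma (-1) N \<Longrightarrow> Xact act \<gamma> v = pbw (e_modes \<gamma>) (h_modes \<gamma>) (f_modes \<gamma>)"
  by (cases \<gamma>)
     (simp add: Xact_def Xlist_def pbw_def Gamma_def Gamma_m_def e_modes_def h_modes_def f_modes_def
       sorted_sort_id)

lemma Gamma_of_pbw_index:
  assumes "pbw_index P Z Q"
  shows "(sorted_list_of_multiset P, sorted_list_of_multiset Z, sorted_list_of_multiset Q) \<in> Gamma (-1) N"
    and "e_modes (sorted_list_of_multiset P, sorted_list_of_multiset Z, sorted_list_of_multiset Q) = P"
    and "h_modes (sorted_list_of_multiset P, sorted_list_of_multiset Z, sorted_list_of_multiset Q) = Z"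
    and "f_modes (sorted_list_of_multiset P, sorted_list_of_multiset Z, sorted_list_of_multiset Q) = Q"
  using assms by (auto simp: pbw_index_def Gamma_def Gamma_m_def e_modes_def h_modes_def f_modes_def)

definition pbw_basis :: "'v set" where
  "pbw_basis = {pbw P Z Q | P Z Q. pbw_index P Z Q}"

lemma image_Xact_Gamma: "(\<lambda>\<gamma>. Xact act \<gamma> v) ` Gamma (-1) N = pbw_basis"
proof
  show "(\<lambda>\<gamma>. Xact act \<gamma> v) ` Gamma (-1) N \<subseteq> pbw_basis"
    using Xact_eq_pbw pbw_index_modes unfolding pbw_basis_def by blast
  show "pbw_basis \<subseteq> (\<lambda>\<gamma>. Xact act \<gamma> v) ` Gamma (-1) N"
  proof
    fix x assume "x \<in> pbw_basis"
    then obtain P Z Q where "x = pbw P Z Q" "pbw_index P Z Q" by (auto simp: pbw_basis_def)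
    then show "x \<in> (\<lambda>\<gamma>. Xact act \<gamma> v) ` Gamma (-1) N"
      using Gamma_of_pbw_index[of P Z Q] Xact_eq_pbw by (metis image_eqI)
  qed
qed

lemma independent_pbw_basis: "independent pbw_basis"
  using induced image_Xact_Gamma unfolding induced_module_def by metis

lemma span_pbw_basis: "span pbw_basis = UNIV"
  using induced image_Xact_Gamma unfolding induced_module_def by metis

lemma pbw_inj:
  assumes "pbw_index P Z Q" "pbw_index P' Z' Q'" "pbw P Z Q = pbw P' Z' Q'"
  shows "P = P' \<and> Z = Z' \<and> Q = Q'"
proof -
  let ?\<gamma> = "(sorted_list_of_multiset P, sorted_list_of_multiset Z, sorted_list_of_multiset Q)"
  let ?\<gamma>' = "(sorted_list_of_multiset P', sorted_list_of_multiset Z', sorted_list_of_multiset Q')"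
  have "Xact act ?\<gamma> v = Xact act ?\<gamma>' v"
    using assms Gamma_of_pbw_index[OF assms(1)] Gamma_of_pbw_index[OF assms(2)] by (simp add: Xact_eq_pbw)
  then have "?\<gamma> = ?\<gamma>'"
    using induced Gamma_of_pbw_index(1)[OF assms(1)] Gamma_of_pbw_index(1)[OF assms(2)]
    unfolding induced_module_def by (auto dest: inj_onD)
  then show ?thesis by (metis mset_sorted_list_of_multiset prod.inject)
qed

definition coef :: "int multiset \<Rightarrow> int multiset \<Rightarrow> int multiset \<Rightarrow> 'v \<Rightarrow> complex" where
  "coef P Z Q u = representation pbw_basis u (pbw P Z Q)"

lemma coef_add: "coef P Z Q (x + y) = coef P Z Q x + coef P Z Q y"
  unfolding coef_def using representation_add[OF independent_pbw_basis] span_pbw_basis by simp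

lemma coef_scale: "coef P Z Q (c *s x) = c * coef P Z Q x"
  unfolding coef_def using representation_scale[OF independent_pbw_basis] span_pbw_basis by simp

lemma coef_diff: "coef P Z Q (x - y) = coef P Z Q x - coef P Z Q y"
  unfolding coef_def using representation_diff[OF independent_pbw_basis] span_pbw_basis by simp

lemma coef_neg: "coef P Z Q (- x) = - coef P Z Q x"
  unfolding coef_def using representation_neg[OF independent_pbw_basis] span_pbw_basis by simp

lemma coef_zero [simp]: "coef P Z Q 0 = 0"
  unfolding coef_def by (simp add: representation_zero)

lemma coef_sum: "coef P Z Q (\<Sum>x\<in>A. f x) = (\<Sum>x\<in>A. coef P Z Q (f x))"
  by (induction A rule: infinite_finite_induct) (auto simp: coef_add)

lemma coef_sum_mset: "coef P Z Q (\<Sum>x\<in>#M. f x) = (\<Sum>x\<in>#M. coef P Z Q (f x))"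
  by (induction M) (auto simp: coef_add)

lemma coef_pbw:
  assumes "pbw_index P Z Q" "pbw_index P' Z' Q'"
  shows "coef P Z Q (pbw P' Z' Q') = (if P' = P \<and> Z' = Z \<and> Q' = Q then 1 else 0)"
proof -
  have "pbw P' Z' Q' \<in> pbw_basis" using assms(2) unfolding pbw_basis_def by blast
  then have "coef P Z Q (pbw P' Z' Q') = (if pbw P Z Q = pbw P' Z' Q' then 1 else 0)"
    unfolding coef_def using representation_basis[OF independent_pbw_basis] by simp
  then show ?thesis using pbw_inj[OF assms] by auto
qed

lemma coef_Fil:
  assumes "pbw_index P Z Q" "u \<in> Fil k" "k < true_ht P Z Q"
  shows "coef P Z Q u = 0"
  using assms(2) unfolding pbw_span_def
proof (induction rule: span_induct_alt)
  case (step c x y)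
  then obtain P' Z' Q' where "x = pbw P' Z' Q'" "pbw_index P' Z' Q'" "true_ht P' Z' Q' \<le> k" by blast
  then have "coef P Z Q x = 0" using coef_pbw[OF assms(1)] assms(3) by auto
  with step show ?case by (simp add: coef_add coef_scale)
qed simp

lemma coef_pbw_longer:
  assumes "pbw_index PT ZT QT" "pbw_index P Z Q" "pbw_len PT ZT QT < pbw_len P Z Q"
  shows "coef PT ZT QT (pbw P Z Q) = 0"
  using coef_pbw[OF assms(1,2)] assms(3) by auto

lemma coef_e_past_shorter:
  assumes T: "pbw_index PT ZT QT" and PZQ: "pbw_index P Z Q"
    and shorter: "pbw_len PT ZT QT < pbw_len P Z Q"
  shows "coef PT ZT QT (e_past_h j P Z Q + e_past_f j P Z Q)
    = (if P = PT \<and> Z = ZT \<and> Q = add_mset (N - j) QT then of_nat (count Q (N - j)) * \<phi> (L Hh N) else 0)"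
proof -
  have same_len: "coef PT ZT QT (pbw P' Z' Q') = 0" if "pbw_index P' Z' Q'" "pbw_len P' Z' Q' = pbw_len P Z Q"
    for P' Z' Q'
    using coef_pbw_longer[OF T that(1)] that(2) shorter by simp
  have h_part: "coef PT ZT QT (e_past_h j P Z Q) = 0"
  proof -
    have "coef PT ZT QT (if j + a \<le> -1 then (-2) *s pbw (add_mset (j + a) P) (Z - {#a#}) Q else 0) = 0"
      if "a \<in># Z" for a
      using that PZQ by (auto simp: coef_scale coef_neg pbw_len_def pbw_index_diff
          dest!: multi_member_split intro!: same_len)
    then show ?thesis by (simp add: e_past_h_def coef_sum_mset cong: image_mset_cong)
  qed
  define n where "n = N - j"
  have "coef PT ZT QT (e_past_f j P Z Q)
      = (\<Sum>m\<in>#Q. if m = n then \<phi> (L Hh N) * coef PT ZT QT (pbw P Z (Q - {#n#})) else 0)"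
    unfolding e_past_f_def coef_sum_mset
  proof (rule sum_mset_cong)
    fix m assume "m \<in># Q"
    then show "coef PT ZT QT (if j + m \<le> -1 then pbw P (add_mset (j + m) Z) (Q - {#m#})
        else if j + m = N then \<phi> (L Hh N) *s pbw P Z (Q - {#m#}) else 0)
      = (if m = n then \<phi> (L Hh N) * coef PT ZT QT (pbw P Z (Q - {#n#})) else 0)"
      using PZQ N_pos unfolding n_def
      by (auto simp: coef_scale pbw_len_def pbw_index_diff dest!: multi_member_split intro!: same_len)
  qed
  also have "\<dots> = of_nat (count Q n) * (if Q - {#n#} = QT then (if P = PT \<and> Z = ZT then \<phi> (L Hh N) else 0) else 0)"
    using coef_pbw[OF T, of P Z "Q - {#n#}"] PZQ by (simp add: sum_mset_delta pbw_index_diff)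
  finally have f_part: "coef PT ZT QT (e_past_f j P Z Q)
      = of_nat (count Q n) * (if Q - {#n#} = QT then (if P = PT \<and> Z = ZT then \<phi> (L Hh N) else 0) else 0)" .
  show ?thesis
    unfolding coef_add h_part f_part count_times_if_diff_eq by (auto simp: n_def)
qed

lemma coef_f_past_shorter:
  assumes T: "pbw_index PT ZT QT" and PZQ: "pbw_index P Z Q"
    and shorter: "pbw_len PT ZT QT < pbw_len P Z Q"
  shows "coef PT ZT QT (f_past_e n P Z Q + f_past_h n P Z Q)
    = (if P = add_mset (N - n) PT \<and> Z = ZT \<and> Q = QT then of_nat (count P (N - n)) * - \<phi> (L Hh N) else 0)"
proof -
  have same_len: "coef PT ZT QT (pbw P' Z' Q') = 0" if "pbw_index P' Z' Q'" "pbw_len P' Z' Q' = pbw_len P Z Q"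
    for P' Z' Q'
    using coef_pbw_longer[OF T that(1)] that(2) shorter by simp
  have h_part: "coef PT ZT QT (f_past_h n P Z Q) = 0"
  proof -
    have "coef PT ZT QT (if n + a \<le> N then 2 *s pbw P (Z - {#a#}) (add_mset (n + a) Q) else 0) = 0"
      if "a \<in># Z" for a
      using that PZQ by (auto simp: coef_scale pbw_len_def pbw_index_diff
          dest!: multi_member_split intro!: same_len)
    then show ?thesis by (simp add: f_past_h_def coef_sum_mset cong: image_mset_cong)
  qed
  define x where "x = N - n"
  have "coef PT ZT QT (f_past_e n P Z Q)
      = (\<Sum>y\<in>#P. if y = x then - \<phi> (L Hh N) * coef PT ZT QT (pbw (P - {#x#}) Z Q) else 0)"
    unfolding f_past_e_def coef_sum_mset
  proof (rule sum_mset_cong)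
    fix y assume "y \<in># P"
    then show "coef PT ZT QT (if n + y \<le> -1 then (-1) *s pbw (P - {#y#}) (add_mset (n + y) Z) Q
        else if n + y = N then (- \<phi> (L Hh N)) *s pbw (P - {#y#}) Z Q else 0)
      = (if y = x then - \<phi> (L Hh N) * coef PT ZT QT (pbw (P - {#x#}) Z Q) else 0)"
      using PZQ N_pos unfolding x_def
      by (auto simp: coef_scale coef_neg pbw_len_def pbw_index_diff dest!: multi_member_split intro!: same_len)
  qed
  also have "\<dots> = of_nat (count P x)
      * (if P - {#x#} = PT then (if Z = ZT \<and> Q = QT then - \<phi> (L Hh N) else 0) else 0)"
    using coef_pbw[OF T, of "P - {#x#}" Z Q] PZQ by (simp add: sum_mset_delta pbw_index_diff)
  finally have e_part: "coef PT ZT QT (f_past_e n P Z Q)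
      = of_nat (count P x) * (if P - {#x#} = PT then (if Z = ZT \<and> Q = QT then - \<phi> (L Hh N) else 0) else 0)" .
  show ?thesis
    unfolding coef_add h_part e_part count_times_if_diff_eq by (auto simp: x_def)
qed

lemma coef_e_past_single_e:
  assumes T: "pbw_index {#t#} ZT {#}" and Z: "pbw_index {#} Z {#}"
  shows "coef {#t#} ZT {#} (e_past_h j {#} Z {#} + e_past_f j {#} Z {#})
    = (if Z = add_mset (t - j) ZT then of_nat (count Z (t - j)) * -2 else 0)"
proof -
  have "coef {#t#} ZT {#} (e_past_h j {#} Z {#})
      = (\<Sum>a\<in>#Z. if a = t - j then -2 * coef {#t#} ZT {#} (pbw {#t#} (Z - {#t - j#}) {#}) else 0)"
    unfolding e_past_h_def coef_sum_mset
  proof (rule sum_mset_cong)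
    fix a assume "a \<in># Z"
    then show "coef {#t#} ZT {#} (if j + a \<le> -1 then (-2) *s pbw {#j + a#} (Z - {#a#}) {#} else 0)
      = (if a = t - j then -2 * coef {#t#} ZT {#} (pbw {#t#} (Z - {#t - j#}) {#}) else 0)"
      using T Z coef_pbw[OF T, of "{#j + a#}" "Z - {#a#}" "{#}"]
      by (auto simp: coef_scale coef_neg pbw_index_diff)
  qed
  also have "\<dots> = of_nat (count Z (t - j)) * (if Z - {#t - j#} = ZT then -2 else 0)"
    using coef_pbw[OF T, of "{#t#}" "Z - {#t - j#}" "{#}"] T Z by (simp add: sum_mset_delta pbw_index_diff)
  finally show ?thesis
    unfolding count_times_if_diff_eq by (simp add: coef_add e_past_f_def)
qed

lemma coef_act_e_pbw:
  assumes "j \<ge> 0" "pbw_index P Z Q" "pbw_index PT ZT QT"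
    and "true_ht P Z Q \<le> h" "true_ht PT ZT QT = h - j"
  shows "coef PT ZT QT (act (L Ee j) (pbw P Z Q))
    = (if true_ht P Z Q = h then coef PT ZT QT (e_past_h j P Z Q + e_past_f j P Z Q) else 0)"
proof -
  have "coef PT ZT QT (act (L Ee j) (pbw P Z Q) - (e_past_h j P Z Q + e_past_f j P Z Q)) = 0"
    using assms by (intro coef_Fil[OF assms(3) act_e_high_pbw_mod_Fil]) auto
  moreover have "coef PT ZT QT (e_past_h j P Z Q + e_past_f j P Z Q) = 0" if "true_ht P Z Q \<noteq> h"
    using assms that by (intro coef_Fil[OF assms(3) e_past_in_Fil]) auto
  ultimately show ?thesis by (auto simp: coef_diff)
qed

lemma coef_act_f_pbw:
  assumes "n > N" "pbw_index P Z Q" "pbw_index PT ZT QT"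
    and "true_ht P Z Q \<le> h" "true_ht PT ZT QT = h - n"
  shows "coef PT ZT QT (act (L Ff n) (pbw P Z Q))
    = (if true_ht P Z Q = h then coef PT ZT QT (f_past_e n P Z Q + f_past_h n P Z Q) else 0)"
proof -
  have "coef PT ZT QT (act (L Ff n) (pbw P Z Q) - (f_past_e n P Z Q + f_past_h n P Z Q)) = 0"
    using assms by (intro coef_Fil[OF assms(3) act_f_high_pbw_mod_Fil]) auto
  moreover have "coef PT ZT QT (f_past_e n P Z Q + f_past_h n P Z Q) = 0" if "true_ht P Z Q \<noteq> h"
    using assms that by (intro coef_Fil[OF assms(3) f_past_in_Fil]) auto
  ultimately show ?thesis by (auto simp: coef_diff)
qed

end

section \<open>Singular vectors\<close>

locale singular_vector = induced_loop_module scale act v \<phi> N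
  for scale :: "complex \<Rightarrow> 'v::ab_group_add \<Rightarrow> 'v" (infixr \<open>*s\<close> 75) and act v \<phi> N +
  fixes a :: "triple \<Rightarrow> complex" and w :: 'v and H :: int and l :: nat
  assumes finite_support: "finite {\<gamma>. a \<gamma> \<noteq> 0}"
    and support_Gamma: "{\<gamma>. a \<gamma> \<noteq> 0} \<subseteq> Gamma (-1) N"
    and w_eq: "w = (\<Sum>\<gamma>\<in>{\<gamma>. a \<gamma> \<noteq> 0}. a \<gamma> *s Xact act \<gamma> v)"
    and singular: "singular (-1) N \<phi> scale act w"
    and H_eq: "H = Max (gHt N ` {\<gamma>. a \<gamma> \<noteq> 0})"
    and l_eq: "l = Min (glen ` {\<gamma>. a \<gamma> \<noteq> 0 \<and> gHt N \<gamma> = H})"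
    and phi_hN: "\<phi> (L Hh N) \<noteq> 0"
begin

abbreviation top :: "triple set" where
  "top \<equiv> {\<gamma>. a \<gamma> \<noteq> 0 \<and> gHt N \<gamma> = H}"

lemma finite_top: "finite top"
  using finite_support by (rule rev_finite_subset) auto

lemma top_Gamma: "\<gamma> \<in> top \<Longrightarrow> \<gamma> \<in> Gamma (-1) N"
  using support_Gamma by auto

lemma l_le_glen: "\<gamma> \<in> top \<Longrightarrow> l \<le> glen \<gamma>"
  unfolding l_eq using finite_top by (intro Min_le) auto

lemma act_e_high_w: "j \<ge> 0 \<Longrightarrow> act (L Ee j) w = 0"
  using singular unfolding singular_def by (auto dest!: spec[of _ "j + 1"])

lemma act_f_high_w: "n > N \<Longrightarrow> act (L Ff n) w = 0"
  using singular unfolding singular_def by (auto dest!: spec[of _ "n - N"])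

lemma gHt_le_H: "a \<gamma> \<noteq> 0 \<Longrightarrow> gHt N \<gamma> \<le> H"
  unfolding H_eq using finite_support by (intro Max_ge) auto

lemma coef_act_w:
  "coef PT ZT QT (act g w)
    = (\<Sum>\<gamma>\<in>{\<gamma>. a \<gamma> \<noteq> 0}. a \<gamma> * coef PT ZT QT (act g (pbw (e_modes \<gamma>) (h_modes \<gamma>) (f_modes \<gamma>))))"
proof -
  have "act g w = (\<Sum>\<gamma>\<in>{\<gamma>. a \<gamma> \<noteq> 0}. a \<gamma> *s act g (pbw (e_modes \<gamma>) (h_modes \<gamma>) (f_modes \<gamma>)))"
    unfolding w_eq act_sum act_scale using support_Gamma by (intro sum.cong) (auto simp: Xact_eq_pbw)
  then show ?thesis by (simp add: coef_sum coef_scale)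
qed

lemma coef_act_e_w:
  assumes "j \<ge> 0" "pbw_index PT ZT QT" "true_ht PT ZT QT = H - j"
  shows "coef PT ZT QT (act (L Ee j) w) = (\<Sum>\<gamma>\<in>top. a \<gamma> * coef PT ZT QT
      (e_past_h j (e_modes \<gamma>) (h_modes \<gamma>) (f_modes \<gamma>) + e_past_f j (e_modes \<gamma>) (h_modes \<gamma>) (f_modes \<gamma>)))"
proof -
  have "coef PT ZT QT (act (L Ee j) w) = (\<Sum>\<gamma>\<in>{\<gamma>. a \<gamma> \<noteq> 0}. if gHt N \<gamma> = H then a \<gamma> * coef PT ZT QT
      (e_past_h j (e_modes \<gamma>) (h_modes \<gamma>) (f_modes \<gamma>) + e_past_f j (e_modes \<gamma>) (h_modes \<gamma>) (f_modes \<gamma>)) else 0)"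
    unfolding coef_act_w
  proof (rule sum.cong[OF refl])
    fix \<gamma> assume "\<gamma> \<in> {\<gamma>. a \<gamma> \<noteq> 0}"
    then have "\<gamma> \<in> Gamma (-1) N" "gHt N \<gamma> \<le> H" using support_Gamma gHt_le_H by auto
    then show "a \<gamma> * coef PT ZT QT (act (L Ee j) (pbw (e_modes \<gamma>) (h_modes \<gamma>) (f_modes \<gamma>)))
      = (if gHt N \<gamma> = H then a \<gamma> * coef PT ZT QT (e_past_h j (e_modes \<gamma>) (h_modes \<gamma>) (f_modes \<gamma>)
          + e_past_f j (e_modes \<gamma>) (h_modes \<gamma>) (f_modes \<gamma>)) else 0)"
      using coef_act_e_pbw[OF assms(1) pbw_index_modes assms(2), of \<gamma> H] assms(3)
      by (simp add: true_ht_modes)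
  qed
  also have "\<dots> = (\<Sum>\<gamma>\<in>top. a \<gamma> * coef PT ZT QT
      (e_past_h j (e_modes \<gamma>) (h_modes \<gamma>) (f_modes \<gamma>) + e_past_f j (e_modes \<gamma>) (h_modes \<gamma>) (f_modes \<gamma>)))"
    unfolding sum.inter_filter[OF finite_support, symmetric] by (rule sum.cong) auto
  finally show ?thesis .
qed

lemma coef_act_f_w:
  assumes "n > N" "pbw_index PT ZT QT" "true_ht PT ZT QT = H - n"
  shows "coef PT ZT QT (act (L Ff n) w) = (\<Sum>\<gamma>\<in>top. a \<gamma> * coef PT ZT QT
      (f_past_e n (e_modes \<gamma>) (h_modes \<gamma>) (f_modes \<gamma>) + f_past_h n (e_modes \<gamma>) (h_modes \<gamma>) (f_modes \<gamma>)))"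
proof -
  have "coef PT ZT QT (act (L Ff n) w) = (\<Sum>\<gamma>\<in>{\<gamma>. a \<gamma> \<noteq> 0}. if gHt N \<gamma> = H then a \<gamma> * coef PT ZT QT
      (f_past_e n (e_modes \<gamma>) (h_modes \<gamma>) (f_modes \<gamma>) + f_past_h n (e_modes \<gamma>) (h_modes \<gamma>) (f_modes \<gamma>)) else 0)"
    unfolding coef_act_w
  proof (rule sum.cong[OF refl])
    fix \<gamma> assume "\<gamma> \<in> {\<gamma>. a \<gamma> \<noteq> 0}"
    then have "\<gamma> \<in> Gamma (-1) N" "gHt N \<gamma> \<le> H" using support_Gamma gHt_le_H by auto
    then show "a \<gamma> * coef PT ZT QT (act (L Ff n) (pbw (e_modes \<gamma>) (h_modes \<gamma>) (f_modes \<gamma>)))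
      = (if gHt N \<gamma> = H then a \<gamma> * coef PT ZT QT (f_past_e n (e_modes \<gamma>) (h_modes \<gamma>) (f_modes \<gamma>)
          + f_past_h n (e_modes \<gamma>) (h_modes \<gamma>) (f_modes \<gamma>)) else 0)"
      using coef_act_f_pbw[OF assms(1) pbw_index_modes assms(2), of \<gamma> H] assms(3)
      by (simp add: true_ht_modes)
  qed
  also have "\<dots> = (\<Sum>\<gamma>\<in>top. a \<gamma> * coef PT ZT QT
      (f_past_e n (e_modes \<gamma>) (h_modes \<gamma>) (f_modes \<gamma>) + f_past_h n (e_modes \<gamma>) (h_modes \<gamma>) (f_modes \<gamma>)))"
    unfolding sum.inter_filter[OF finite_support, symmetric] by (rule sum.cong) auto
  finally show ?thesis .
qed

lemma minimal_top_no_f: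
  assumes \<gamma>: "\<gamma> \<in> top" and len: "glen \<gamma> = l"
  shows "snd (snd \<gamma>) = []"
proof (rule ccontr)
  assume "snd (snd \<gamma>) \<noteq> []"
  then obtain n where n: "n \<in># f_modes \<gamma>" by (cases "snd (snd \<gamma>)") (auto simp: f_modes_def)
  obtain P0 Z0 Q0 where modes: "e_modes \<gamma> = P0" "h_modes \<gamma> = Z0" "f_modes \<gamma> = Q0" by blast
  have PZQ0: "pbw_index P0 Z0 Q0" using pbw_index_modes[OF top_Gamma[OF \<gamma>]] by (simp add: modes)
  have j: "N - n \<ge> 0" using PZQ0 n by (auto simp: pbw_index_def modes)
  have T: "pbw_index P0 Z0 (Q0 - {#n#})" using PZQ0 by (rule pbw_index_diff)
  have ht_T: "true_ht P0 Z0 (Q0 - {#n#}) = H - (N - n)"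
    using true_ht_diff(3)[of n Q0 P0 Z0] true_ht_modes[of \<gamma>] \<gamma> n by (simp add: modes)
  have shorter: "pbw_len P0 Z0 (Q0 - {#n#}) < pbw_len (e_modes g) (h_modes g) (f_modes g)" if "g \<in> top" for g
    using l_le_glen[OF that] len size_Diff1_less[of n Q0] n
    by (simp add: glen_eq_pbw_len pbw_len_def modes)
  have "0 = coef P0 Z0 (Q0 - {#n#}) (act (L Ee (N - n)) w)"
    using act_e_high_w[OF j] by simp
  also have "\<dots> = (\<Sum>g\<in>top. if g = \<gamma> then a \<gamma> * (of_nat (count Q0 n) * \<phi> (L Hh N)) else 0)"
    unfolding coef_act_e_w[OF j T ht_T]
  proof (rule sum.cong[OF refl])
    fix g assume g: "g \<in> top"
    have "e_modes g = P0 \<and> h_modes g = Z0 \<and> f_modes g = add_mset n (Q0 - {#n#}) \<longleftrightarrow> g = \<gamma>"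
      using Gamma_eqI[OF top_Gamma[OF g] top_Gamma[OF \<gamma>]] n by (auto simp: modes)
    then show "a g * coef P0 Z0 (Q0 - {#n#}) (e_past_h (N - n) (e_modes g) (h_modes g) (f_modes g)
        + e_past_f (N - n) (e_modes g) (h_modes g) (f_modes g))
      = (if g = \<gamma> then a \<gamma> * (of_nat (count Q0 n) * \<phi> (L Hh N)) else 0)"
      using coef_e_past_shorter[OF T pbw_index_modes[OF top_Gamma[OF g]] shorter[OF g]]
      by (auto simp: modes)
  qed
  also have "\<dots> = a \<gamma> * (of_nat (count Q0 n) * \<phi> (L Hh N))"
    using finite_top \<gamma> by simp
  finally show False
    using \<gamma> phi_hN n by (simp add: modes count_eq_zero_iff)
qed

lemma minimal_top_no_e:
  assumes \<gamma>: "\<gamma> \<in> top" and len: "glen \<gamma> = l"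
  shows "fst \<gamma> = []"
proof (rule ccontr)
  assume "fst \<gamma> \<noteq> []"
  then obtain x where x: "x \<in># e_modes \<gamma>" by (cases "fst \<gamma>") (auto simp: e_modes_def)
  obtain P0 Z0 Q0 where modes: "e_modes \<gamma> = P0" "h_modes \<gamma> = Z0" "f_modes \<gamma> = Q0" by blast
  have PZQ0: "pbw_index P0 Z0 Q0" using pbw_index_modes[OF top_Gamma[OF \<gamma>]] by (simp add: modes)
  have n: "N - x > N" using PZQ0 x by (auto simp: pbw_index_def modes)
  have T: "pbw_index (P0 - {#x#}) Z0 Q0" using PZQ0 by (rule pbw_index_diff)
  have ht_T: "true_ht (P0 - {#x#}) Z0 Q0 = H - (N - x)"
    using true_ht_diff(1)[of x P0 Z0 Q0] true_ht_modes[of \<gamma>] \<gamma> x by (simp add: modes)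
  have shorter: "pbw_len (P0 - {#x#}) Z0 Q0 < pbw_len (e_modes g) (h_modes g) (f_modes g)" if "g \<in> top" for g
    using l_le_glen[OF that] len size_Diff1_less[of x P0] x
    by (simp add: glen_eq_pbw_len pbw_len_def modes)
  have "0 = coef (P0 - {#x#}) Z0 Q0 (act (L Ff (N - x)) w)"
    using act_f_high_w[OF n] by simp
  also have "\<dots> = (\<Sum>g\<in>top. if g = \<gamma> then a \<gamma> * (of_nat (count P0 x) * - \<phi> (L Hh N)) else 0)"
    unfolding coef_act_f_w[OF n T ht_T]
  proof (rule sum.cong[OF refl])
    fix g assume g: "g \<in> top"
    have "e_modes g = add_mset x (P0 - {#x#}) \<and> h_modes g = Z0 \<and> f_modes g = Q0 \<longleftrightarrow> g = \<gamma>"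
      using Gamma_eqI[OF top_Gamma[OF g] top_Gamma[OF \<gamma>]] x by (auto simp: modes)
    then show "a g * coef (P0 - {#x#}) Z0 Q0 (f_past_e (N - x) (e_modes g) (h_modes g) (f_modes g)
        + f_past_h (N - x) (e_modes g) (h_modes g) (f_modes g))
      = (if g = \<gamma> then a \<gamma> * (of_nat (count P0 x) * - \<phi> (L Hh N)) else 0)"
      using coef_f_past_shorter[OF T pbw_index_modes[OF top_Gamma[OF g]] shorter[OF g]]
      by (auto simp: modes)
  qed
  also have "\<dots> = a \<gamma> * (of_nat (count P0 x) * - \<phi> (L Hh N))"
    using finite_top \<gamma> by simp
  finally show False
    using \<gamma> phi_hN x by (simp add: modes count_eq_zero_iff)
qed

text \<open>Let \<open>\<gamma>0 = h(Z0) v\<close> be a top monomial of minimal length and \<open>\<gamma>i\<close> the monomial obtained by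
  replacing its mode \<open>h(m)\<close> by \<open>e(-i)\<close> and \<open>f(N + m + i)\<close>. In \<open>e(-m-i) w\<close>, the monomial
  \<open>e(-i) h(Z0 - m) v\<close> arises only from \<open>\<gamma>0\<close>, by turning \<open>h(m)\<close> into \<open>-2 e(-i)\<close>, and from
  \<open>\<gamma>i\<close>, by contracting \<open>f(N + m + i)\<close> to \<open>\<phi>(h(N))\<close>.\<close>

context
  fixes \<gamma>0 \<gamma>i :: triple and m i :: int
  assumes \<gamma>0: "\<gamma>0 \<in> top" "glen \<gamma>0 = l" "e_modes \<gamma>0 = {#}" "f_modes \<gamma>0 = {#}"
    and \<gamma>i: "\<gamma>i \<in> Gamma (-1) N" "e_modes \<gamma>i = {#-i#}" "h_modes \<gamma>i = h_modes \<gamma>0 - {#m#}"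
      "f_modes \<gamma>i = {#N + m + i#}"
    and m: "m \<in># h_modes \<gamma>0"
    and i: "1 \<le> i" "i \<le> - m"
begin

lemma pbw_index_removed_mode: "pbw_index {#-i#} (h_modes \<gamma>0 - {#m#}) {#}"
  using pbw_index_modes[OF top_Gamma[OF \<gamma>0(1)]] \<gamma>0 i by (simp add: pbw_index_diff)

lemma true_ht_removed_mode: "true_ht {#-i#} (h_modes \<gamma>0 - {#m#}) {#} = H - (- m - i)"
  using true_ht_modes[of \<gamma>0] true_ht_diff(2)[OF m, of "{#}" "{#}"] \<gamma>0 by simp

lemma gHt_removed_mode: "gHt N \<gamma>i = H"
  using true_ht_modes[of \<gamma>i] true_ht_removed_mode \<gamma>i by simp

lemma size_removed_mode: "Suc (size (h_modes \<gamma>0 - {#m#})) = l"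
  using \<gamma>0 size_Suc_Diff1[OF m] by (simp add: glen_eq_pbw_len pbw_len_def)

lemma glen_removed_mode: "glen \<gamma>i = Suc l"
  using \<gamma>i size_removed_mode by (simp add: glen_eq_pbw_len pbw_len_def)

lemma coef_e_past_top_removed_mode:
  assumes g: "g \<in> top"
  shows "a g * coef {#-i#} (h_modes \<gamma>0 - {#m#}) {#}
      (e_past_h (- m - i) (e_modes g) (h_modes g) (f_modes g) + e_past_f (- m - i) (e_modes g) (h_modes g) (f_modes g))
    = (if g = \<gamma>0 then a \<gamma>0 * (of_nat (count (h_modes \<gamma>0) m) * -2) else 0)
      + (if g = \<gamma>i then a \<gamma>i * \<phi> (L Hh N) else 0)"
proof (cases "glen g = l")
  case True
  then have "fst g = []" "snd (snd g) = []"
    using minimal_top_no_e minimal_top_no_f g by auto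
  then have e_f: "e_modes g = {#}" "f_modes g = {#}" by (simp_all add: e_modes_def f_modes_def)
  have "h_modes g = h_modes \<gamma>0 \<longleftrightarrow> g = \<gamma>0"
    using Gamma_eqI[OF top_Gamma[OF g] top_Gamma[OF \<gamma>0(1)]] e_f \<gamma>0 by auto
  moreover have "g \<noteq> \<gamma>i" using True glen_removed_mode by auto
  ultimately show ?thesis
    using coef_e_past_single_e[OF pbw_index_removed_mode, of "h_modes g" "- m - i"] e_f m
      pbw_index_modes[OF top_Gamma[OF g]]
    by auto
next
  case False
  then have longer: "l < glen g" using l_le_glen[OF g] by simp
  have "e_modes g = {#-i#} \<and> h_modes g = h_modes \<gamma>0 - {#m#} \<and> f_modes g = {#N + m + i#} \<longleftrightarrow> g = \<gamma>i"
    using Gamma_eqI[OF top_Gamma[OF g] \<gamma>i(1)] \<gamma>i by auto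
  moreover have "g \<noteq> \<gamma>0" using False \<gamma>0 by auto
  moreover have "pbw_len {#-i#} (h_modes \<gamma>0 - {#m#}) {#} < pbw_len (e_modes g) (h_modes g) (f_modes g)"
    using longer size_removed_mode by (simp add: glen_eq_pbw_len pbw_len_def)
  ultimately show ?thesis
    using coef_e_past_shorter[OF pbw_index_removed_mode pbw_index_modes[OF top_Gamma[OF g]]]
    by (auto simp: algebra_simps)
qed

lemma removed_mode_coefficient: "a \<gamma>i * \<phi> (L Hh N) = 2 * a \<gamma>0 * of_nat (count (h_modes \<gamma>0) m)"
proof -
  have j: "- m - i \<ge> 0" using i by simp
  have "0 = coef {#-i#} (h_modes \<gamma>0 - {#m#}) {#} (act (L Ee (- m - i)) w)"
    using act_e_high_w[OF j] by simp
  also have "\<dots> = (\<Sum>g\<in>top. (if g = \<gamma>0 then a \<gamma>0 * (of_nat (count (h_modes \<gamma>0) m) * -2) else 0)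
      + (if g = \<gamma>i then a \<gamma>i * \<phi> (L Hh N) else 0))"
    unfolding coef_act_e_w[OF j pbw_index_removed_mode true_ht_removed_mode]
    by (rule sum.cong[OF refl]) (rule coef_e_past_top_removed_mode)
  also have "\<dots> = a \<gamma>0 * (of_nat (count (h_modes \<gamma>0) m) * -2) + a \<gamma>i * \<phi> (L Hh N)"
    using finite_top \<gamma>0(1) gHt_removed_mode by (simp add: sum.distrib)
  finally show ?thesis by (simp add: algebra_simps)
qed

end

lemma minimal_top_coefficient:
  assumes \<gamma>0: "([], ms, []) \<in> top" "glen ([], ms, []) = l"
    and k: "k < l" and i: "1 \<le> i" "i \<le> - (ms ! k)"
  shows "a ([- i], take k ms @ drop (Suc k) ms, [N + ms ! k + i])
    = 2 * a ([], ms, []) / \<phi> (L Hh N) * of_nat (card {j. j < l \<and> ms ! j = ms ! k})"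
proof -
  let ?\<gamma>i = "([- i], take k ms @ drop (Suc k) ms, [N + ms ! k + i])"
  have l: "length ms = l" using \<gamma>0(2) by (simp add: glen_def)
  have ms: "sorted ms" "\<forall>x\<in>set ms. x \<le> -1"
    using top_Gamma[OF \<gamma>0(1)] by (auto simp: Gamma_def Gamma_m_def)
  have "?\<gamma>i \<in> Gamma (-1) N"
    using ms i k l sorted_take_drop_Suc[of ms k] set_take_drop_Suc_subset[of k ms]
    by (auto simp: Gamma_def Gamma_m_def)
  then have "a ?\<gamma>i * \<phi> (L Hh N) = 2 * a ([], ms, []) * of_nat (count (h_modes ([], ms, [])) (ms ! k))"
    by (intro removed_mode_coefficient)
       (use \<gamma>0 i k l in \<open>auto simp: e_modes_def h_modes_def f_modes_def mset_take_drop_Suc\<close>)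
  then show ?thesis
    using phi_hN card_nth_eq_count[of ms k] l by (simp add: h_modes_def field_simps)
qed

end

theorem mainTheorem4:
  fixes N :: int
    and \<phi> :: "gen \<Rightarrow> complex"
    and scale :: "complex \<Rightarrow> 'v::ab_group_add \<Rightarrow> 'v"
    and act :: "gen \<Rightarrow> 'v \<Rightarrow> 'v"
    and v w :: 'v
    and a :: "triple \<Rightarrow> complex"
    and H :: int and l :: nat
  assumes N: "N \<ge> 1"
    and hom: "lie_hom_S (-1) N \<phi>"
    and hN: "\<phi> (L Hh N) \<noteq> 0"
    and M: "induced_module (-1) N \<phi> scale act v"
    and fin: "finite {\<gamma>. a \<gamma> \<noteq> 0}"
    and supp: "{\<gamma>. a \<gamma> \<noteq> 0} \<subseteq> Gamma (-1) N"
    and w: "w = (\<Sum>\<gamma>\<in>{\<gamma>. a \<gamma> \<noteq> 0}. scale (a \<gamma>) (Xact act \<gamma> v))"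
    and sing: "singular (-1) N \<phi> scale act w"
    and notv: "\<forall>c. w \<noteq> scale c v"
    and H: "H = Max (gHt N ` {\<gamma>. a \<gamma> \<noteq> 0})"
    and l: "l = Min (glen ` {\<gamma>. a \<gamma> \<noteq> 0 \<and> gHt N \<gamma> = H})"
  shows "(\<forall>\<gamma>. a \<gamma> \<noteq> 0 \<and> gHt N \<gamma> = H \<and> glen \<gamma> = l \<longrightarrow>
            fst \<gamma> = [] \<and> snd (snd \<gamma>) = [])
       \<and> (\<forall>ms k i. a ([], ms, []) \<noteq> 0 \<and> gHt N ([], ms, []) = H \<and> glen ([], ms, []) = l
            \<and> k < l \<and> 1 \<le> i \<and> i \<le> - (ms ! k) \<longrightarrow>
            a ([- i], take k ms @ drop (Suc k) ms, [N + ms ! k + i])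
              = 2 * a ([], ms, []) / \<phi> (L Hh N) * of_nat (card {j. j < l \<and> ms ! j = ms ! k}))"
proof -
  have "module scale" using M unfolding induced_module_def hatg_module_def by blast
  then interpret singular_vector scale act v \<phi> N a w H l
    by (intro singular_vector.intro induced_loop_module.intro singular_vector_axioms.intro
        induced_loop_module_axioms.intro) (use assms in auto)
  show ?thesis
    using minimal_top_no_e minimal_top_no_f minimal_top_coefficient by auto
qed

end
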